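(* Let $L$ be a finite-dimensional Lie algebra over a field $F$. Then $L$ is supersolvable if and only if $\eta(L:M)=1$ for all maximal subalgebras $M$ of $L$.
   Context: $L$ is supersolvable if there is a chain $0=L_0\subset L_1\subset\cdots\subset L_n=L$ of ideals of $L$ with $\dim(L_{i}/L_{i-1})=1$ for all $i$. For a nonzero subalgebra $X$ of $L$, the strict core $k(X)$ is the sum of all ideals of $L$ that are proper subalgebras of $X$ (it is $0$ if there are none). For a maximal subalgebra $M$, a subalgebra $C$ is a completion of $M$ if $C\not\subseteq M$ but every proper subalgebra of $C$ that is an ideal of $L$ is contained in $M$; an ideal completion is a completion that is an ideal of $L$. The ideal index $\eta(L:M)$ is $\dim(C/k(C))$ for any ideal completion $C$ of $M$ (independent of the choice of $C$). *)

theory Defs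
  imports Complex_Main
begin

text \<open>A Lie algebra over a field: the whole type 'b is the underlying vector space
  (scalar multiplication scale over the field 'a), with Lie bracket br.\<close>

definition lie_algebra :: "('a::field \<Rightarrow> 'b::ab_group_add \<Rightarrow> 'b) \<Rightarrow> ('b \<Rightarrow> 'b \<Rightarrow> 'b) \<Rightarrow> bool" where
  "lie_algebra scale br \<longleftrightarrow>
     vector_space scale \<and>
     (\<forall>x y z. br (x + y) z = br x z + br y z) \<and>
     (\<forall>x y z. br x (y + z) = br x y + br x z) \<and>
     (\<forall>a x y. br (scale a x) y = scale a (br x y)) \<and>
     (\<forall>a x y. br x (scale a y) = scale a (br x y)) \<and>
     (\<forall>x. br x x = 0) \<and>
     (\<forall>x y z. br x (br y z) + br y (br z x) + br z (br x y) = 0)"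

definition fin_dim :: "('a::field \<Rightarrow> 'b::ab_group_add \<Rightarrow> 'b) \<Rightarrow> bool" where
  "fin_dim scale \<longleftrightarrow> (\<exists>B. finite B \<and> module.span scale B = UNIV)"

definition lie_subalgebra :: "('a::field \<Rightarrow> 'b::ab_group_add \<Rightarrow> 'b) \<Rightarrow> ('b \<Rightarrow> 'b \<Rightarrow> 'b) \<Rightarrow> 'b set \<Rightarrow> bool" where
  "lie_subalgebra scale br S \<longleftrightarrow> module.subspace scale S \<and> (\<forall>x\<in>S. \<forall>y\<in>S. br x y \<in> S)"

definition lie_ideal :: "('a::field \<Rightarrow> 'b::ab_group_add \<Rightarrow> 'b) \<Rightarrow> ('b \<Rightarrow> 'b \<Rightarrow> 'b) \<Rightarrow> 'b set \<Rightarrow> bool" where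
  "lie_ideal scale br I \<longleftrightarrow> module.subspace scale I \<and> (\<forall>x. \<forall>y\<in>I. br x y \<in> I)"

definition maximal_subalgebra :: "('a::field \<Rightarrow> 'b::ab_group_add \<Rightarrow> 'b) \<Rightarrow> ('b \<Rightarrow> 'b \<Rightarrow> 'b) \<Rightarrow> 'b set \<Rightarrow> bool" where
  "maximal_subalgebra scale br M \<longleftrightarrow>
     lie_subalgebra scale br M \<and> M \<noteq> UNIV \<and>
     (\<forall>S. lie_subalgebra scale br S \<and> M \<subseteq> S \<longrightarrow> S = M \<or> S = UNIV)"

text \<open>Supersolvable: a chain 0 = L_0 \<subset> ... \<subset> L_n = L of ideals with dim(L_i/L_{i-1}) = 1,
  the quotient dimension written as the difference of dimensions.\<close>
definition supersolvable :: "('a::field \<Rightarrow> 'b::ab_group_add \<Rightarrow> 'b) \<Rightarrow> ('b \<Rightarrow> 'b \<Rightarrow> 'b) \<Rightarrow> bool" where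
  "supersolvable scale br \<longleftrightarrow>
     (\<exists>n Ls. Ls 0 = {0} \<and> Ls n = UNIV \<and>
        (\<forall>i\<le>n. lie_ideal scale br (Ls i)) \<and>
        (\<forall>i<n. Ls i \<subseteq> Ls (Suc i) \<and>
               vector_space.dim scale (Ls (Suc i)) = vector_space.dim scale (Ls i) + 1))"

definition strict_core :: "('a::field \<Rightarrow> 'b::ab_group_add \<Rightarrow> 'b) \<Rightarrow> ('b \<Rightarrow> 'b \<Rightarrow> 'b) \<Rightarrow> 'b set \<Rightarrow> 'b set" where
  "strict_core scale br X =
     module.span scale (\<Union>{I. lie_ideal scale br I \<and> lie_subalgebra scale br I \<and> I \<subset> X})"

definition completion :: "('a::field \<Rightarrow> 'b::ab_group_add \<Rightarrow> 'b) \<Rightarrow> ('b \<Rightarrow> 'b \<Rightarrow> 'b) \<Rightarrow> 'b set \<Rightarrow> 'b set \<Rightarrow> bool" where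
  "completion scale br M C \<longleftrightarrow>
     lie_subalgebra scale br C \<and> \<not> C \<subseteq> M \<and>
     (\<forall>I. lie_subalgebra scale br I \<and> I \<subset> C \<and> lie_ideal scale br I \<longrightarrow> I \<subseteq> M)"

definition ideal_completion :: "('a::field \<Rightarrow> 'b::ab_group_add \<Rightarrow> 'b) \<Rightarrow> ('b \<Rightarrow> 'b \<Rightarrow> 'b) \<Rightarrow> 'b set \<Rightarrow> 'b set \<Rightarrow> bool" where
  "ideal_completion scale br M C \<longleftrightarrow> completion scale br M C \<and> lie_ideal scale br C"

text \<open>Ideal index eta(L:M) = dim(C / k(C)) for an (any) ideal completion C of M.\<close>
definition ideal_index :: "('a::field \<Rightarrow> 'b::ab_group_add \<Rightarrow> 'b) \<Rightarrow> ('b \<Rightarrow> 'b \<Rightarrow> 'b) \<Rightarrow> 'b set \<Rightarrow> nat" where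
  "ideal_index scale br M =
     (SOME d. \<exists>C. ideal_completion scale br M C \<and>
        d = vector_space.dim scale C - vector_space.dim scale (strict_core scale br C))"

end

theory Submission
  imports Defs "HOL-Library.Set_Algebras"
begin

text \<open>
  If \<open>L\<close> is supersolvable and \<open>C\<close> is an ideal completion of \<open>M\<close>, the ideals
  \<open>core C + (L\<^sub>i \<inter> C)\<close> along a chain of ideals with one-dimensional steps are each equal to
  \<open>core C\<close> or to \<open>C\<close>, and where they jump the dimension grows by at most one. The index is well
  defined because for two completions \<open>C\<^sub>1, C\<^sub>2\<close> and
  \<open>X = core C\<^sub>1 + core C\<^sub>2 + C\<^sub>1 \<inter> C\<^sub>2\<close> the chief factors
  \<open>(C\<^sub>i + X) / X \<cong> C\<^sub>i / core C\<^sub>i\<close> either coincide or are both complemented by \<open>M\<close>.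

  Conversely, every chief factor \<open>H / K\<close> is shown to be one-dimensional, by induction on the
  codimension of \<open>K\<close>, so that \<open>L / H\<close> may be assumed supersolvable. If a maximal subalgebra
  \<open>M\<close> contains \<open>K\<close> but not \<open>H\<close>, then \<open>H / K \<cong> C / core C\<close> for an ideal completion
  \<open>C \<subseteq> H\<close> of \<open>M\<close>. Otherwise \<open>H / K\<close> lies in the Frattini subalgebra of \<open>L / K\<close>: no proper
  subalgebra containing \<open>K\<close> supplements \<open>H\<close>. Fitting decompositions then show that \<open>L\<^sup>2\<close> acts
  nilpotently on \<open>L / K\<close>, so that \<open>[L\<^sup>2, H] \<subseteq> K\<close> by Engel's theorem, and that every
  \<open>ad x\<close> has an eigenvector in \<open>H / K\<close>; its eigenspace is an ideal, hence all of \<open>H / K\<close>.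
  So \<open>L\<close> acts on \<open>H / K\<close> by scalars and every line in \<open>H / K\<close> is an ideal.
\<close>

lemma funpow_closed: "(\<And>u. u \<in> U \<Longrightarrow> T u \<in> U) \<Longrightarrow> u \<in> U \<Longrightarrow> (T ^^ n) u \<in> U"
  by (induction n) auto

lemma funpow_injective_mod:
  assumes inj: "\<And>u. u \<in> U \<Longrightarrow> T u \<in> K \<Longrightarrow> u \<in> K" and TU: "\<And>u. u \<in> U \<Longrightarrow> T u \<in> U"
  shows "u \<in> U \<Longrightarrow> (T ^^ n) u \<in> K \<Longrightarrow> u \<in> K"
proof (induction n arbitrary: u)
  case (Suc n)
  then have "T u \<in> K" using TU by (simp add: funpow_swap1)
  then show ?case using inj Suc by blast
qed simp

lemma funpow_exit_point:
  assumes TU: "\<And>u. u \<in> U \<Longrightarrow> T u \<in> U"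
  shows "v \<in> U \<Longrightarrow> v \<notin> K \<Longrightarrow> (T ^^ n) v \<in> K \<Longrightarrow> \<exists>w\<in>U. w \<notin> K \<and> T w \<in> K"
proof (induction n arbitrary: v)
  case (Suc n)
  then show ?case
    using TU by (cases "T v \<in> K") (auto simp: funpow_swap1)
qed simp

lemma nat_ex_step_change:
  assumes "P 0" "\<not> P n"
  shows "\<exists>i<n. P i \<and> \<not> P (Suc i)"
  using assms(2)
proof (induction n)
  case (Suc n)
  then show ?case by (cases "P n") (auto intro: less_SucI)
qed (use assms(1) in simp)

locale fin_dim_lie_algebra =
  fixes scale :: "'a::field \<Rightarrow> 'b::ab_group_add \<Rightarrow> 'b" and br :: "'b \<Rightarrow> 'b \<Rightarrow> 'b"
  assumes lie_algebra: "lie_algebra scale br" and fin_dim: "fin_dim scale"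
begin

sublocale vector_space scale
  using lie_algebra unfolding lie_algebra_def by auto

sublocale vector_space_pair scale scale ..

abbreviation linear_endo :: "('b \<Rightarrow> 'b) \<Rightarrow> bool" where
  "linear_endo \<equiv> Vector_Spaces.linear scale scale"

lemma finite_basis_exists: "\<exists>B. independent B \<and> span B = UNIV \<and> finite B"
proof -
  obtain B0 where B0: "finite B0" "span B0 = UNIV"
    using fin_dim unfolding fin_dim_def by auto
  obtain B where B: "independent B" "UNIV \<subseteq> span B"
    using basis_exists[of UNIV] by metis
  have "finite B" using independent_span_bound[OF B0(1)] B0(2) B(1) by auto
  then show ?thesis using B by auto
qed

definition fin_basis :: "'b set" where
  "fin_basis = (SOME B. independent B \<and> span B = UNIV \<and> finite B)"

sublocale fd: finite_dimensional_vector_space scale fin_basis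
  using someI_ex[OF finite_basis_exists] unfolding fin_basis_def by unfold_locales auto

lemma br_add_left: "br (x + y) z = br x z + br y z"
  and br_add_right: "br x (y + z) = br x y + br x z"
  and br_scale_left: "br (scale a x) y = scale a (br x y)"
  and br_scale_right: "br x (scale a y) = scale a (br x y)"
  and br_self [simp]: "br x x = 0"
  and br_jacobi_cyclic: "br x (br y z) + br y (br z x) + br z (br x y) = 0"
  using lie_algebra unfolding lie_algebra_def by auto

lemma linear_br_right: "linear_endo (br x)"
  by (simp add: Vector_Spaces.linear_iff vector_space_axioms br_add_right br_scale_right)

lemma linear_br_left: "linear_endo (\<lambda>x. br x y)"
  by (simp add: Vector_Spaces.linear_iff vector_space_axioms br_add_left br_scale_left)

lemmas br_zero_right [simp] = linear_0[OF linear_br_right]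
  and br_zero_left [simp] = linear_0[OF linear_br_left, simplified]
  and br_minus_right = linear_neg[OF linear_br_right]
  and br_diff_right = linear_diff[OF linear_br_right]
  and br_diff_left = linear_diff[OF linear_br_left, simplified]

lemma br_anticomm: "br x y = - br y x"
proof -
  have "br x y + br y x = 0"
    using br_self[of "x + y", unfolded br_add_left br_add_right] by (simp add: add.commute)
  then show ?thesis by (simp add: eq_neg_iff_add_eq_0)
qed

lemma br_jacobi: "br x (br y z) = br (br x y) z + br y (br x z)"
proof -
  have "br y (br z x) = - br y (br x z)" and "br z (br x y) = - br (br x y) z"
    by (simp_all add: br_anticomm[of z] br_minus_right)
  with br_jacobi_cyclic[of x y z] show ?thesis
    by (simp add: algebra_simps eq_neg_iff_add_eq_0 flip: diff_conv_add_uminus)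
qed

abbreviation subalg :: "'b set \<Rightarrow> bool" where "subalg \<equiv> lie_subalgebra scale br"
abbreviation ideal :: "'b set \<Rightarrow> bool" where "ideal \<equiv> lie_ideal scale br"

lemma ideal_subspace: "ideal I \<Longrightarrow> subspace I"
  by (simp add: lie_ideal_def)

lemma ideal_br_in: "ideal I \<Longrightarrow> y \<in> I \<Longrightarrow> br x y \<in> I"
  by (simp add: lie_ideal_def)

lemma ideal_br_in_left: "ideal I \<Longrightarrow> y \<in> I \<Longrightarrow> br y x \<in> I"
  by (subst br_anticomm) (rule subspace_neg[OF ideal_subspace ideal_br_in])

lemma ideal_subalg: "ideal I \<Longrightarrow> subalg I"
  by (simp add: lie_ideal_def lie_subalgebra_def)

lemma subalg_subspace: "subalg S \<Longrightarrow> subspace S"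
  by (simp add: lie_subalgebra_def)

lemma subalg_br_in: "subalg S \<Longrightarrow> x \<in> S \<Longrightarrow> y \<in> S \<Longrightarrow> br x y \<in> S"
  by (simp add: lie_subalgebra_def)

lemma ideal_UNIV: "ideal UNIV"
  and ideal_zero: "ideal {0}"
  by (simp_all add: lie_ideal_def)

lemma ideal_Int: "ideal I \<Longrightarrow> ideal J \<Longrightarrow> ideal (I \<inter> J)"
  by (simp add: lie_ideal_def subspace_inter)

lemma ideal_span_Union:
  assumes "\<And>I. I \<in> F \<Longrightarrow> ideal I"
  shows "ideal (span (\<Union>F))"
  unfolding lie_ideal_def
proof (intro conjI allI ballI)
  fix x y assume "y \<in> span (\<Union>F)"
  then show "br x y \<in> span (\<Union>F)"
    using assms
    by (induction rule: span_induct)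
       (auto simp: subspace_def br_add_right br_scale_right span_zero span_add span_scale
             intro: span_base ideal_br_in)
qed simp

lemma subspace_set_plus: "subspace A \<Longrightarrow> subspace B \<Longrightarrow> subspace (A + B)"
  using subspace_sums[of A B] by (simp add: set_plus_def setcompr_eq_image) (smt (verit) Collect_cong)

lemma subspace_subset_set_plus_left: "subspace B \<Longrightarrow> A \<subseteq> A + B"
  using set_zero_plus2[of B A] subspace_0 by (simp add: add.commute)

lemma subspace_subset_set_plus_right: "subspace A \<Longrightarrow> B \<subseteq> A + B"
  by (simp add: set_zero_plus2 subspace_0)

lemma set_plus_subset_subspace: "A \<subseteq> C \<Longrightarrow> B \<subseteq> C \<Longrightarrow> subspace C \<Longrightarrow> A + B \<subseteq> C"
  by (auto simp: set_plus_def intro: subspace_add)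

lemma ideal_set_plus: "ideal I \<Longrightarrow> ideal J \<Longrightarrow> ideal (I + J)"
  by (auto simp: lie_ideal_def ideal_subspace subspace_set_plus br_add_right
           intro!: set_plus_intro elim!: set_plus_elim)

lemma subalg_set_plus_ideal:
  assumes S: "subalg S" and J: "ideal J"
  shows "subalg (S + J)"
  unfolding lie_subalgebra_def
proof (intro conjI ballI)
  show "subspace (S + J)"
    using S J by (simp add: subalg_subspace ideal_subspace subspace_set_plus)
  fix x y assume "x \<in> S + J" "y \<in> S + J"
  then obtain a b c d where abcd: "a \<in> S" "b \<in> J" "x = a + b" "c \<in> S" "d \<in> J" "y = c + d"
    by (auto elim!: set_plus_elim)
  then have "br x y = br a c + (br a d + br b c + br b d)"
    by (simp add: br_add_left br_add_right algebra_simps)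
  moreover have "br a d + br b c + br b d \<in> J"
    using abcd J by (meson ideal_br_in ideal_br_in_left ideal_subspace subspace_add)
  ultimately show "br x y \<in> S + J"
    using abcd S by (auto intro: subalg_br_in)
qed

lemma dim_set_plus_Int:
  "subspace A \<Longrightarrow> subspace B \<Longrightarrow> dim (A + B) + dim (A \<inter> B) = dim A + dim B"
  using fd.dim_sums_Int[of A B] by (simp add: set_plus_def) (smt (verit) Collect_cong)

lemma dim_psubset_subspace: "subspace A \<Longrightarrow> subspace B \<Longrightarrow> A \<subset> B \<Longrightarrow> dim A < dim B"
  by (metis fd.dim_psubset span_eq_iff)

lemma ex_dim_max:
  assumes "P X"
  shows "\<exists>Y. P Y \<and> (\<forall>Z. P Z \<longrightarrow> dim Z \<le> dim Y)"
proof -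
  obtain Y where "P Y" "\<forall>Z. P Z \<longrightarrow> fd.dimension - dim Y \<le> fd.dimension - dim Z"
    using ex_has_least_nat[of P X "\<lambda>Y. fd.dimension - dim Y"] assms by blast
  then show ?thesis
    using fd.dim_subset_UNIV by (metis diff_le_mono2 diff_diff_cancel)
qed

lemma dim_Suc_imp_span_insert:
  assumes "subspace A" "subspace B" "A \<subseteq> B" "dim B = dim A + 1"
  shows "\<exists>v\<in>B. v \<notin> A \<and> B = span (insert v A)"
proof -
  have "A \<noteq> B" using assms(4) by auto
  then obtain v where v: "v \<in> B" "v \<notin> A" using assms(3) by blast
  have "span (insert v A) \<subseteq> B" using v assms by (simp add: span_minimal)
  moreover have "dim (span (insert v A)) = dim A + 1"
    using v(2) fd.dim_insert[of v A] span_eq_iff[THEN iffD2, OF assms(1)] by simp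
  ultimately have "span (insert v A) = B"
    using fd.subspace_dim_equal[of "span (insert v A)" B] assms by simp
  then show ?thesis using v by blast
qed

lemma span_insert_subspace_mem:
  assumes "subspace A"
  shows "w \<in> span (insert v A) \<longleftrightarrow> (\<exists>t. w - scale t v \<in> A)"
  using span_breakdown_eq[of w v A] span_eq_iff[THEN iffD2, OF assms] by simp

section \<open>Fitting's lemma modulo a subspace\<close>

lemma linear_funpow: "linear_endo T \<Longrightarrow> linear_endo (T ^^ n)"
  by (induction n) (simp_all add: linear_id Vector_Spaces.linear_compose)

lemma fitting_image_stabilizes:
  assumes T: "linear_endo T" and U: "subspace U" and K: "subspace K" "K \<subseteq> U"
    and TU: "\<And>u. u \<in> U \<Longrightarrow> T u \<in> U"
  shows "\<exists>N. \<forall>u\<in>U. \<exists>u'\<in>U. (T ^^ N) u - (T ^^ Suc N) u' \<in> K"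
proof -
  define I where "I n = (T ^^ n) ` U + K" for n
  have subspace_I: "subspace (I n)" for n
    unfolding I_def using linear_subspace_image[OF linear_funpow[OF T] U] K(1)
    by (rule subspace_set_plus)
  have "I n \<subseteq> U" for n
    unfolding I_def using K U TU funpow_closed[of U T] by (intro set_plus_subset_subspace) auto
  then have dim_I: "dim (I n) \<le> dim U" for n by (rule fd.dim_subset)
  have I_decr: "I (Suc n) \<subseteq> I n" for n
  proof -
    have "(T ^^ Suc n) ` U \<subseteq> (T ^^ n) ` U"
      using TU by (auto simp: funpow_swap1)
    then show ?thesis unfolding I_def by (rule set_plus_mono2) simp
  qed
  have "\<exists>N. I N = I (Suc N)"
  proof (rule ccontr)
    assume "\<nexists>N. I N = I (Suc N)"
    then have dim_decr: "dim (I (Suc n)) < dim (I n)" for n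
      using I_decr by (metis psubsetI dim_psubset_subspace subspace_I)
    have "dim (I n) + n \<le> dim (I 0)" for n
    proof (induction n)
      case (Suc n)
      then show ?case using dim_decr[of n] by linarith
    qed simp
    from this[of "Suc (dim U)"] dim_I[of 0] show False by simp
  qed
  then obtain N where N: "I N = I (Suc N)" ..
  show ?thesis
  proof (intro exI ballI)
    fix u assume "u \<in> U"
    then have "(T ^^ N) u \<in> I N"
      unfolding I_def using subspace_subset_set_plus_left[OF K(1)] by blast
    then have "(T ^^ N) u \<in> I (Suc N)" by (simp only: N)
    then obtain u' k where "u' \<in> U" "k \<in> K" "(T ^^ N) u = (T ^^ Suc N) u' + k"
      unfolding I_def by (auto elim!: set_plus_elim)
    then show "\<exists>u'\<in>U. (T ^^ N) u - (T ^^ Suc N) u' \<in> K"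
      by (metis add_diff_cancel_left')
  qed
qed

lemma fitting_image_stabilizes_funpow:
  assumes T: "linear_endo T" and U: "subspace U" and K: "subspace K" "K \<subseteq> U"
    and TU: "\<And>u. u \<in> U \<Longrightarrow> T u \<in> U" and TK: "\<And>u. u \<in> K \<Longrightarrow> T u \<in> K"
  shows "\<exists>N. \<forall>k. \<forall>u\<in>U. \<exists>u'\<in>U. (T ^^ N) u - (T ^^ (N + k)) u' \<in> K"
proof -
  obtain N where N: "\<forall>u\<in>U. \<exists>u'\<in>U. (T ^^ N) u - (T ^^ Suc N) u' \<in> K"
    using fitting_image_stabilizes[OF T U K TU] by blast
  have "\<forall>u\<in>U. \<exists>u'\<in>U. (T ^^ N) u - (T ^^ (N + k)) u' \<in> K" for k
  proof (induction k)
    case 0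
    then show ?case using subspace_0[OF K(1)] by force
  next
    case (Suc k)
    show ?case
    proof
      fix u assume "u \<in> U"
      with Suc obtain u' where u': "u' \<in> U" "(T ^^ N) u - (T ^^ (N + k)) u' \<in> K"
        by blast
      with N obtain u'' where u'': "u'' \<in> U" "(T ^^ N) u' - (T ^^ Suc N) u'' \<in> K"
        by blast
      have "(T ^^ k) ((T ^^ N) u' - (T ^^ Suc N) u'') \<in> K"
        using funpow_closed[of K T] TK u''(2) by blast
      moreover have "(T ^^ k) ((T ^^ N) u') = (T ^^ (N + k)) u'"
        by (simp only: add.commute[of N k] funpow_add o_apply)
      moreover have "(T ^^ k) ((T ^^ Suc N) u'') = (T ^^ (N + Suc k)) u''"
        by (simp only: add_Suc_shift add.commute[of N] funpow_add o_apply)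
      ultimately have "(T ^^ (N + k)) u' - (T ^^ (N + Suc k)) u'' \<in> K"
        by (simp only: linear_diff[OF linear_funpow[OF T]])
      with u'(2) have "(T ^^ N) u - (T ^^ (N + Suc k)) u'' \<in> K"
        using subspace_add[OF K(1)] by fastforce
      then show "\<exists>u'\<in>U. (T ^^ N) u - (T ^^ (N + Suc k)) u' \<in> K"
        using u''(1) by blast
    qed
  qed
  then show ?thesis by blast
qed

lemma injective_mod_imp_surjective_mod:
  assumes T: "linear_endo T" and U: "subspace U" and K: "subspace K" "K \<subseteq> U"
    and TU: "\<And>u. u \<in> U \<Longrightarrow> T u \<in> U"
    and inj: "\<And>u. u \<in> U \<Longrightarrow> T u \<in> K \<Longrightarrow> u \<in> K"
    and u: "u \<in> U"
  shows "\<exists>u'\<in>U. u - T u' \<in> K"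
proof -
  obtain N where "\<forall>u\<in>U. \<exists>u'\<in>U. (T ^^ N) u - (T ^^ Suc N) u' \<in> K"
    using fitting_image_stabilizes[OF T U K TU] by blast
  then obtain u' where u': "u' \<in> U" "(T ^^ N) u - (T ^^ Suc N) u' \<in> K"
    using u by blast
  moreover have "(T ^^ Suc N) u' = (T ^^ N) (T u')"
    by (simp only: funpow_Suc_right o_apply)
  ultimately have "(T ^^ N) (u - T u') \<in> K"
    by (simp only: linear_diff[OF linear_funpow[OF T]])
  moreover have "u - T u' \<in> U" using u u' TU U subspace_diff by blast
  ultimately have "u - T u' \<in> K" using funpow_injective_mod[of U T K, OF inj TU] by blast
  then show ?thesis using u'(1) by blast
qed

section \<open>Ideal completions and the ideal index\<close>

abbreviation core :: "'b set \<Rightarrow> 'b set" where "core \<equiv> strict_core scale br"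
abbreviation max_subalg :: "'b set \<Rightarrow> bool" where "max_subalg \<equiv> maximal_subalgebra scale br"
abbreviation ideal_compl :: "'b set \<Rightarrow> 'b set \<Rightarrow> bool" where
  "ideal_compl \<equiv> ideal_completion scale br"

lemma ideal_strict_core: "ideal (core C)"
  unfolding strict_core_def by (rule ideal_span_Union) auto

lemma strict_core_subset: "subspace C \<Longrightarrow> core C \<subseteq> C"
  unfolding strict_core_def by (rule span_minimal) auto

lemma ideal_psubset_imp_subset_strict_core:
  assumes "ideal I" "I \<subset> C"
  shows "I \<subseteq> core C"
proof -
  have "I \<subseteq> \<Union>{I. ideal I \<and> subalg I \<and> I \<subset> C}"
    using assms ideal_subalg by blast
  then show ?thesis unfolding strict_core_def using span_superset by (rule subset_trans)
qed

lemma ideal_compl_ideal: "ideal_compl M C \<Longrightarrow> ideal C"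
  and ideal_compl_not_subset: "ideal_compl M C \<Longrightarrow> \<not> C \<subseteq> M"
  and ideal_compl_minimal: "ideal_compl M C \<Longrightarrow> ideal I \<Longrightarrow> I \<subset> C \<Longrightarrow> I \<subseteq> M"
  using ideal_subalg by (simp_all add: ideal_completion_def completion_def)

lemma max_subalg_subalg: "max_subalg M \<Longrightarrow> subalg M"
  and max_subalg_neq_UNIV: "max_subalg M \<Longrightarrow> M \<noteq> UNIV"
  and max_subalg_maximal: "max_subalg M \<Longrightarrow> subalg S \<Longrightarrow> M \<subseteq> S \<Longrightarrow> S = M \<or> S = UNIV"
  by (simp_all add: maximal_subalgebra_def)

lemma max_subalg_subspace: "max_subalg M \<Longrightarrow> subspace M"
  by (simp add: max_subalg_subalg subalg_subspace)

lemma strict_core_subset_max_subalg: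
  assumes "max_subalg M" "ideal_compl M C"
  shows "core C \<subseteq> M"
  unfolding strict_core_def
  by (rule span_minimal) (use assms ideal_compl_minimal max_subalg_subspace in auto)

lemma strict_core_psubset:
  assumes "max_subalg M" "ideal_compl M C"
  shows "core C \<subset> C"
  using strict_core_subset_max_subalg[OF assms] ideal_compl_not_subset[OF assms(2)]
    strict_core_subset[OF ideal_subspace[OF ideal_compl_ideal[OF assms(2)]]] by blast

lemma max_subalg_plus_ideal:
  assumes M: "max_subalg M" and C: "ideal C" "\<not> C \<subseteq> M"
  shows "M + C = UNIV"
proof -
  have "subalg (M + C)" using M C by (simp add: subalg_set_plus_ideal max_subalg_subalg)
  moreover have "M \<subseteq> M + C" "C \<subseteq> M + C"
    using subspace_subset_set_plus_left[OF ideal_subspace] subspace_subset_set_plus_right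
      max_subalg_subspace C M by auto
  ultimately show ?thesis using max_subalg_maximal[OF M] C(2) by blast
qed

lemma ideal_compl_exists_below:
  assumes H: "ideal H" "\<not> H \<subseteq> M"
  shows "\<exists>C. ideal_compl M C \<and> C \<subseteq> H"
proof -
  obtain C where C: "ideal C" "C \<subseteq> H" "\<not> C \<subseteq> M"
    and least: "\<And>Z. ideal Z \<and> Z \<subseteq> H \<and> \<not> Z \<subseteq> M \<Longrightarrow> dim C \<le> dim Z"
    using ex_has_least_nat[of "\<lambda>I. ideal I \<and> I \<subseteq> H \<and> \<not> I \<subseteq> M" H dim] H by blast
  have "ideal_compl M C"
    unfolding ideal_completion_def completion_def
  proof (intro conjI allI impI)
    fix I assume I: "subalg I \<and> I \<subset> C \<and> ideal I"
    then have "dim I < dim C" using dim_psubset_subspace ideal_subspace C(1) by blast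
    moreover have "I \<subseteq> H" using I C(2) by blast
    ultimately show "I \<subseteq> M" using least I by (meson not_le)
  qed (use C ideal_subalg in auto)
  with C(2) show ?thesis by blast
qed

lemma max_subalg_exists:
  assumes "subalg S" "S \<noteq> UNIV"
  shows "\<exists>M. max_subalg M \<and> S \<subseteq> M"
proof -
  obtain M where M: "subalg M" "S \<subseteq> M" "M \<noteq> UNIV"
    and greatest: "\<And>Z. subalg Z \<and> S \<subseteq> Z \<and> Z \<noteq> UNIV \<Longrightarrow> dim Z \<le> dim M"
    using ex_dim_max[of "\<lambda>Z. subalg Z \<and> S \<subseteq> Z \<and> Z \<noteq> UNIV" S] assms by blast
  have "max_subalg M"
    unfolding maximal_subalgebra_def
  proof (intro conjI allI impI)
    fix Z assume Z: "subalg Z \<and> M \<subseteq> Z"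
    show "Z = M \<or> Z = UNIV"
    proof (cases "Z = UNIV")
      case False
      then have "dim Z \<le> dim M" using greatest Z M by blast
      then show ?thesis using fd.subspace_dim_equal[of M Z] Z M subalg_subspace by blast
    qed simp
  qed (use M in auto)
  then show ?thesis using M by blast
qed

text \<open>
  For an ideal completion \<open>C\<close> of \<open>M\<close> and an ideal \<open>X \<subseteq> M\<close> containing \<open>core C\<close>, the
  factor \<open>(C + X) / X \<cong> C / core C\<close> is a chief factor.\<close>

lemma ideal_compl_Int_eq_strict_core:
  assumes C: "ideal_compl M C" and X: "ideal X" "X \<subseteq> M" "core C \<subseteq> X"
  shows "C \<inter> X = core C"
proof -
  have "C \<inter> X \<subseteq> core C"
    using ideal_compl_not_subset[OF C] X ideal_Int[OF ideal_compl_ideal[OF C] X(1)]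
    by (intro ideal_psubset_imp_subset_strict_core) blast+
  moreover have "core C \<subseteq> C"
    using strict_core_subset[OF ideal_subspace[OF ideal_compl_ideal[OF C]]] .
  ultimately show ?thesis using X(3) by blast
qed

lemma dim_ideal_compl_plus:
  assumes C: "ideal_compl M C" and X: "ideal X" "X \<subseteq> M" "core C \<subseteq> X"
  shows "dim (C + X) + dim (core C) = dim C + dim X"
  using dim_set_plus_Int[OF ideal_subspace[OF ideal_compl_ideal[OF C]] ideal_subspace[OF X(1)]]
    ideal_compl_Int_eq_strict_core[OF assms] by simp

lemma ideal_compl_plus_chief:
  assumes C: "ideal_compl M C" and X: "ideal X" "X \<subseteq> M" "core C \<subseteq> X"
    and Z: "ideal Z" "X \<subseteq> Z" "Z \<subseteq> C + X"
  shows "Z = X \<or> Z = C + X"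
proof (cases "C \<subseteq> Z")
  case True
  then have "C + X \<subseteq> Z" using Z by (simp add: set_plus_subset_subspace ideal_subspace)
  then show ?thesis using Z by blast
next
  case False
  have "Z \<inter> C \<subseteq> X"
    using ideal_psubset_imp_subset_strict_core[of "Z \<inter> C" C] ideal_Int[OF Z(1) ideal_compl_ideal[OF C]]
      False X(3) by blast
  have "Z \<subseteq> X"
  proof
    fix z assume "z \<in> Z"
    then obtain c x where cx: "c \<in> C" "x \<in> X" "z = c + x" using Z(3) by (auto elim!: set_plus_elim)
    then have "c \<in> Z" using \<open>z \<in> Z\<close> Z(2) subspace_diff[OF ideal_subspace[OF Z(1)], of z x] by auto
    then show "z \<in> X"
      using \<open>Z \<inter> C \<subseteq> X\<close> cx subspace_add[OF ideal_subspace[OF X(1)]] by blast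
  qed
  then show ?thesis using Z by blast
qed

lemma codim_max_subalg_ideal_compl_plus:
  assumes M: "max_subalg M" and C1: "ideal_compl M C1" and C2: "ideal_compl M C2"
    and X: "ideal X" "X \<subseteq> M" "core C1 \<subseteq> X"
    and disj: "(C1 + X) \<inter> (C2 + X) \<subseteq> X"
  shows "dim (UNIV::'b set) + dim X = dim M + dim (C1 + X)"
proof -
  have iC1: "ideal C1" and iC2: "ideal C2" using C1 C2 ideal_compl_ideal by auto
  have sX: "subspace X" using X ideal_subspace by auto
  have iS: "ideal (C1 + X)" using iC1 X by (simp add: ideal_set_plus)
  define P where "P = M \<inter> (C1 + X)"
  text \<open>\<open>P\<close> is an ideal, since \<open>L = M + C2\<close> and \<open>C2\<close> brackets \<open>P \<subseteq> C1 + X\<close> into \<open>X \<subseteq> M\<close>.\<close>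
  have "ideal P"
    unfolding lie_ideal_def
  proof (intro conjI allI ballI)
    show sP: "subspace P"
      unfolding P_def using max_subalg_subspace[OF M] ideal_subspace[OF iS] by (rule subspace_inter)
    fix y z assume z: "z \<in> P"
    have "y \<in> M + C2" using max_subalg_plus_ideal[OF M iC2 ideal_compl_not_subset[OF C2]] by simp
    then obtain m c where mc: "m \<in> M" "c \<in> C2" "y = m + c" by (auto elim!: set_plus_elim)
    have "br m z \<in> M" using subalg_br_in[OF max_subalg_subalg[OF M] mc(1)] z P_def by blast
    moreover have "br m z \<in> C1 + X" "br c z \<in> C1 + X"
      using ideal_br_in[OF iS] z P_def by blast+
    moreover have "br c z \<in> C2 + X"
      using ideal_br_in_left[OF iC2 mc(2)] subspace_subset_set_plus_left[OF sX] by blast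
    ultimately have "br m z \<in> P" "br c z \<in> P" using disj X(2) unfolding P_def by blast+
    then show "br y z \<in> P" using mc(3) br_add_left sP subspace_add by metis
  qed
  moreover have "X \<subseteq> P" "P \<subseteq> C1 + X"
    unfolding P_def using X(2) subspace_subset_set_plus_right[OF ideal_subspace[OF iC1]] by blast+
  moreover have "P \<noteq> C1 + X"
    using ideal_compl_not_subset[OF C1] subspace_subset_set_plus_left[OF sX, of C1]
    unfolding P_def by blast
  ultimately have "M \<inter> (C1 + X) = X"
    using ideal_compl_plus_chief[OF C1 X] unfolding P_def by blast
  moreover have "M + (C1 + X) = UNIV"
    using max_subalg_plus_ideal[OF M iS] ideal_compl_not_subset[OF C1]
      subspace_subset_set_plus_left[OF sX, of C1] by blast
  ultimately show ?thesis
    using dim_set_plus_Int[OF max_subalg_subspace[OF M] ideal_subspace[OF iS]] by simp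
qed

lemma ideal_compl_index_unique:
  assumes M: "max_subalg M" and C1: "ideal_compl M C1" and C2: "ideal_compl M C2"
  shows "dim C1 - dim (core C1) = dim C2 - dim (core C2)"
proof (cases "C1 \<inter> C2 \<subseteq> M")
  case False
  have iC12: "ideal (C1 \<inter> C2)" using C1 C2 ideal_compl_ideal ideal_Int by blast
  then have "C1 = C2"
    using ideal_compl_minimal[OF C1 iC12] ideal_compl_minimal[OF C2 iC12] False by blast
  then show ?thesis by simp
next
  case True
  have iC1: "ideal C1" and iC2: "ideal C2" using C1 C2 ideal_compl_ideal by auto
  define X where "X = core C1 + core C2 + C1 \<inter> C2"
  have iX: "ideal X"
    unfolding X_def by (simp add: ideal_set_plus ideal_strict_core ideal_Int iC1 iC2)
  have XM: "X \<subseteq> M"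
    unfolding X_def using strict_core_subset_max_subalg[OF M] C1 C2 True max_subalg_subspace[OF M]
    by (intro set_plus_subset_subspace) auto
  have "core C1 + core C2 \<subseteq> X"
    unfolding X_def by (rule subspace_subset_set_plus_left[OF ideal_subspace[OF ideal_Int[OF iC1 iC2]]])
  then have k1: "core C1 \<subseteq> X" and k2: "core C2 \<subseteq> X"
    using subspace_subset_set_plus_left[OF ideal_subspace[OF ideal_strict_core], of "core C1" C2]
      subspace_subset_set_plus_right[OF ideal_subspace[OF ideal_strict_core[of C1]], of "core C2"]
    by blast+
  have d1: "dim (C1 + X) + dim (core C1) = dim C1 + dim X"
    and d2: "dim (C2 + X) + dim (core C2) = dim C2 + dim X"
    using dim_ideal_compl_plus[OF C1 iX XM k1] dim_ideal_compl_plus[OF C2 iX XM k2] .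
  have "dim (core C1) \<le> dim C1" "dim (core C2) \<le> dim C2"
    using fd.dim_subset strict_core_subset ideal_subspace iC1 iC2 by auto
  moreover have "dim (C1 + X) = dim (C2 + X)"
  proof (cases "(C1 + X) \<inter> (C2 + X) \<subseteq> X")
    case True
    then show ?thesis
      using codim_max_subalg_ideal_compl_plus[OF M C1 C2 iX XM k1]
        codim_max_subalg_ideal_compl_plus[OF M C2 C1 iX XM k2] by (simp add: Int_commute)
  next
    case False
    have X_sub: "X \<subseteq> (C1 + X) \<inter> (C2 + X)"
      using subspace_subset_set_plus_right[OF ideal_subspace[OF iC1], of X]
        subspace_subset_set_plus_right[OF ideal_subspace[OF iC2], of X] by blast
    have "ideal ((C1 + X) \<inter> (C2 + X))" using iC1 iC2 iX by (simp add: ideal_Int ideal_set_plus)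
    then have "(C1 + X) \<inter> (C2 + X) = C1 + X" "(C1 + X) \<inter> (C2 + X) = C2 + X"
      using ideal_compl_plus_chief[OF C1 iX XM k1, of "(C1 + X) \<inter> (C2 + X)"]
        ideal_compl_plus_chief[OF C2 iX XM k2, of "(C1 + X) \<inter> (C2 + X)"] X_sub False by auto
    then show ?thesis by simp
  qed
  ultimately show ?thesis using d1 d2 by linarith
qed

lemma ideal_index_eq:
  assumes M: "max_subalg M" and C: "ideal_compl M C"
  shows "ideal_index scale br M = dim C - dim (core C)"
proof -
  have "\<exists>d C. ideal_compl M C \<and> d = dim C - dim (core C)" using C by blast
  from someI_ex[OF this] obtain C'
    where "ideal_compl M C'" "ideal_index scale br M = dim C' - dim (core C')"
    unfolding ideal_index_def by blast
  then show ?thesis using ideal_compl_index_unique[OF M C] by simp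
qed

section \<open>Chief factors\<close>

definition chief_factor :: "'b set \<Rightarrow> 'b set \<Rightarrow> bool" where
  "chief_factor K H \<longleftrightarrow> ideal K \<and> ideal H \<and> K \<subset> H \<and>
     (\<forall>Z. ideal Z \<longrightarrow> K \<subseteq> Z \<longrightarrow> Z \<subseteq> H \<longrightarrow> Z = K \<or> Z = H)"

lemma chief_factorD:
  assumes "chief_factor K H"
  shows "ideal K" "ideal H" "K \<subset> H" "\<And>Z. ideal Z \<Longrightarrow> K \<subseteq> Z \<Longrightarrow> Z \<subseteq> H \<Longrightarrow> Z = K \<or> Z = H"
  using assms unfolding chief_factor_def by blast+

lemma chief_factor_above:
  assumes "ideal Z" "Z \<noteq> UNIV"
  shows "\<exists>Z'. chief_factor Z Z'"
proof -
  obtain Z' where Z': "ideal Z'" "Z \<subset> Z'" and least: "\<And>Y. ideal Y \<and> Z \<subset> Y \<Longrightarrow> dim Z' \<le> dim Y"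
    using ex_has_least_nat[of "\<lambda>Y. ideal Y \<and> Z \<subset> Y" UNIV dim] ideal_UNIV assms by blast
  have "Y = Z \<or> Y = Z'" if Y: "ideal Y" "Z \<subseteq> Y" "Y \<subseteq> Z'" for Y
  proof (rule ccontr)
    assume "\<not> (Y = Z \<or> Y = Z')"
    then have "Z \<subset> Y" "Y \<subset> Z'" using Y by auto
    then have "dim Y < dim Z'" "dim Z' \<le> dim Y"
      using dim_psubset_subspace ideal_subspace Y(1) Z'(1) least by blast+
    then show False by simp
  qed
  then show ?thesis using assms(1) Z' unfolding chief_factor_def by blast
qed

lemma chief_factor_strict_core:
  assumes M: "max_subalg M" and C: "ideal_compl M C"
  shows "chief_factor (core C) C"
  unfolding chief_factor_def
proof (intro conjI allI impI)
  fix Z assume "ideal Z" "core C \<subseteq> Z" "Z \<subseteq> C"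
  then show "Z = core C \<or> Z = C"
    using ideal_psubset_imp_subset_strict_core[of Z C] by blast
qed (use ideal_strict_core ideal_compl_ideal[OF C] strict_core_psubset[OF M C] in auto)

section \<open>Supersolvable algebras have ideal index one\<close>

lemma Int_span_insert_subset:
  assumes A: "subspace A" and C: "subspace C"
  shows "\<exists>y. span (insert v A) \<inter> C \<subseteq> span (insert y (A \<inter> C))"
proof (cases "span (insert v A) \<inter> C \<subseteq> A")
  case True
  then have "span (insert v A) \<inter> C \<subseteq> span (insert 0 (A \<inter> C))"
    using span_superset[of "A \<inter> C"] by auto
  then show ?thesis by blast
next
  case False
  then obtain y0 where y0: "y0 \<in> span (insert v A)" "y0 \<in> C" "y0 \<notin> A" by blast
  then obtain a0 where a0: "y0 - scale a0 v \<in> A" using span_insert_subspace_mem[OF A] by blast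
  have "a0 \<noteq> 0" using a0 y0(3) by auto
  have "y \<in> span (insert y0 (A \<inter> C))" if y: "y \<in> span (insert v A)" "y \<in> C" for y
  proof -
    obtain a where a: "y - scale a v \<in> A" using y(1) span_insert_subspace_mem[OF A] by blast
    have eq: "y - scale (a / a0) y0 = (y - scale a v) - scale (a / a0) (y0 - scale a0 v)"
      using \<open>a0 \<noteq> 0\<close> by (simp add: scale_right_diff_distrib)
    have "y - scale (a / a0) y0 \<in> A"
      unfolding eq using a a0 A by (simp add: subspace_diff subspace_scale)
    moreover have "y - scale (a / a0) y0 \<in> C" using y(2) y0(2) C by (simp add: subspace_diff subspace_scale)
    ultimately have "y - scale (a / a0) y0 \<in> span (A \<inter> C)" using span_base by blast
    then show ?thesis using span_breakdown_eq by blast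
  qed
  then show ?thesis by blast
qed

lemma supersolvable_imp_ideal_compl_index_one:
  assumes ss: "supersolvable scale br" and M: "max_subalg M" and C: "ideal_compl M C"
  shows "dim C - dim (core C) = 1"
proof -
  obtain n Ls where L0: "Ls 0 = {0}" and Ln: "Ls n = UNIV" and Li: "\<forall>i\<le>n. ideal (Ls i)"
    and Ls: "\<forall>i<n. Ls i \<subseteq> Ls (Suc i) \<and> dim (Ls (Suc i)) = dim (Ls i) + 1"
    using ss unfolding supersolvable_def by blast
  define k where "k = core C"
  have iC: "ideal C" and sC: "subspace C" using ideal_compl_ideal[OF C] ideal_subspace by auto
  have sk: "subspace k" unfolding k_def by (rule ideal_subspace[OF ideal_strict_core])
  have kC: "k \<subset> C" unfolding k_def by (rule strict_core_psubset[OF M C])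
  define J where "J i = k + (Ls i \<inter> C)" for i
  have kJ: "k \<subseteq> J i" if "i \<le> n" for i
    unfolding J_def using that Li iC by (auto intro!: subspace_subset_set_plus_left ideal_subspace ideal_Int)
  have JC: "J i \<subseteq> C" for i
    unfolding J_def using kC sC by (intro set_plus_subset_subspace) auto
  have J_cases: "J i = k \<or> J i = C" if "i \<le> n" for i
  proof -
    have "ideal (J i)"
      unfolding J_def k_def using Li that iC by (simp add: ideal_set_plus ideal_strict_core ideal_Int)
    then show ?thesis
      using chief_factorD(4)[OF chief_factor_strict_core[OF M C]] kJ[OF that] JC[of i]
      unfolding k_def by blast
  qed
  have "J 0 = k"
    using kJ[of 0] unfolding J_def L0 by (simp add: subspace_0 sC)
  moreover have "J n = C"
    using JC[of n] subspace_subset_set_plus_right[OF sk, of C] unfolding J_def Ln by simp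
  ultimately obtain i where i: "i < n" "J i = k" "J (Suc i) = C"
  proof -
    obtain i where "i < n" "J i = k" "J (Suc i) \<noteq> k"
      using nat_ex_step_change[of "\<lambda>i. J i = k" n] \<open>J 0 = k\<close> \<open>J n = C\<close> kC by blast
    then show thesis using that J_cases[of "Suc i"] by simp
  qed
  have sLi: "subspace (Ls i)" and sLs: "subspace (Ls (Suc i))"
    using Li i(1) ideal_subspace by auto
  obtain v where "Ls (Suc i) = span (insert v (Ls i))"
    using dim_Suc_imp_span_insert[OF sLi sLs] Ls i(1) by blast
  moreover obtain y where "span (insert v (Ls i)) \<inter> C \<subseteq> span (insert y (Ls i \<inter> C))"
    using Int_span_insert_subset[OF sLi sC] by blast
  moreover have "span (insert y (Ls i \<inter> C)) \<subseteq> span (insert y k)"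
    using i(2) subspace_subset_set_plus_right[OF sk] unfolding J_def by (intro span_mono) blast
  ultimately have "Ls (Suc i) \<inter> C \<subseteq> span (insert y k)" by blast
  moreover have "k \<subseteq> span (insert y k)" by (meson span_superset subset_insertI subset_trans)
  ultimately have "C \<subseteq> span (insert y k)"
    using i(3) unfolding J_def by (metis set_plus_subset_subspace subspace_span)
  then have "dim C \<le> dim k + 1"
    using fd.dim_subset[of C "span (insert y k)"] fd.dim_insert[of y k] by (simp split: if_splits)
  moreover have "dim k < dim C" by (rule dim_psubset_subspace[OF sk sC kC])
  ultimately show ?thesis unfolding k_def by linarith
qed

section \<open>Supplemented chief factors and chains of ideals\<close>

text \<open>A chief factor \<open>H / K\<close> with \<open>K \<subseteq> M\<close>, \<open>H \<nsubseteq> M\<close> is isomorphic to \<open>C / core C\<close> for an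
  ideal completion \<open>C \<subseteq> H\<close> of \<open>M\<close>.\<close>

lemma dim_supplemented_chief_factor:
  assumes M: "max_subalg M" and index_one: "\<And>C. ideal_compl M C \<Longrightarrow> dim C - dim (core C) = 1"
    and KH: "chief_factor K H" and K: "K \<subseteq> M" and H: "\<not> H \<subseteq> M"
  shows "dim H = dim K + 1"
proof -
  note chief = chief_factorD[OF KH]
  obtain C where C: "ideal_compl M C" "C \<subseteq> H"
    using ideal_compl_exists_below[OF chief(2) H] by blast
  have iC: "ideal C" and sK: "subspace K" and sH: "subspace H"
    using ideal_compl_ideal[OF C(1)] chief ideal_subspace by auto
  have "core C + K \<subseteq> H"
    using strict_core_subset[OF ideal_subspace[OF iC]] C(2) chief(3) sH
    by (intro set_plus_subset_subspace) auto
  then have "core C + K = K \<or> core C + K = H"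
    using ideal_set_plus[OF ideal_strict_core chief(1)]
      subspace_subset_set_plus_right[OF ideal_subspace[OF ideal_strict_core]]
    by (intro chief(4))
  moreover have "core C + K \<subseteq> M"
    using strict_core_subset_max_subalg[OF M C(1)] K max_subalg_subspace[OF M]
    by (rule set_plus_subset_subspace)
  ultimately have "core C \<subseteq> K"
    using H subspace_subset_set_plus_left[OF sK, of "core C"] by auto
  moreover have "C \<inter> K \<subseteq> core C"
    using ideal_Int[OF iC chief(1)] K ideal_compl_not_subset[OF C(1)]
    by (intro ideal_psubset_imp_subset_strict_core) blast+
  ultimately have core_eq: "core C = C \<inter> K"
    using strict_core_subset[OF ideal_subspace[OF iC]] by blast
  have "C + K \<subseteq> H"
    using C(2) chief(3) sH by (intro set_plus_subset_subspace) auto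
  then have "C + K = K \<or> C + K = H"
    using ideal_set_plus[OF iC chief(1)] subspace_subset_set_plus_right[OF ideal_subspace[OF iC]]
    by (intro chief(4))
  moreover have "\<not> C \<subseteq> K" using ideal_compl_not_subset[OF C(1)] K by blast
  ultimately have "C + K = H" using subspace_subset_set_plus_left[OF sK, of C] by blast
  then have "dim H + dim (core C) = dim C + dim K"
    using dim_set_plus_Int[OF ideal_subspace[OF iC] sK] core_eq by simp
  moreover have "dim (core C) \<le> dim C"
    using fd.dim_subset strict_core_subset ideal_subspace iC by blast
  ultimately show ?thesis using index_one[OF C(1)] by linarith
qed

definition unit_ideal_chain :: "'b set \<Rightarrow> bool" where
  "unit_ideal_chain J \<longleftrightarrow> (\<exists>m Hs. Hs 0 = J \<and> Hs m = UNIV \<and> (\<forall>j\<le>m. ideal (Hs j)) \<and>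
      (\<forall>j<m. Hs j \<subseteq> Hs (Suc j) \<and> dim (Hs (Suc j)) = dim (Hs j) + 1))"

lemma supersolvable_iff_unit_ideal_chain: "supersolvable scale br \<longleftrightarrow> unit_ideal_chain {0}"
  unfolding supersolvable_def unit_ideal_chain_def ..

lemma unit_ideal_chainI:
  assumes J: "ideal J"
    and step: "\<And>Z Z'. J \<subseteq> Z \<Longrightarrow> chief_factor Z Z' \<Longrightarrow> dim Z' = dim Z + 1"
  shows "unit_ideal_chain J"
proof -
  have "unit_ideal_chain Z" if "ideal Z" "J \<subseteq> Z" "dim (UNIV::'b set) - dim Z = n" for Z n
    using that
  proof (induction n arbitrary: Z)
    case 0
    then have "Z = UNIV" using fd.subspace_dim_equal[of Z UNIV] ideal_subspace by auto
    then show ?case unfolding unit_ideal_chain_def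
      by (intro exI[of _ 0] exI[of _ "\<lambda>_. Z"]) (auto simp: ideal_UNIV)
  next
    case (Suc n)
    then obtain Z' where Z': "chief_factor Z Z'" using chief_factor_above by force
    then have dim_Z': "dim Z' = dim Z + 1" using step Suc.prems(2) by blast
    have "unit_ideal_chain Z'"
      using Suc.IH[of Z'] Suc.prems chief_factorD[OF Z'] dim_Z' by force
    then obtain m Hs where H: "Hs 0 = Z'" "Hs m = UNIV" "\<forall>j\<le>m. ideal (Hs j)"
      "\<forall>j<m. Hs j \<subseteq> Hs (Suc j) \<and> dim (Hs (Suc j)) = dim (Hs j) + 1"
      unfolding unit_ideal_chain_def by blast
    define Hs' where "Hs' j = (if j = 0 then Z else Hs (j - 1))" for j
    have "\<forall>j\<le>Suc m. ideal (Hs' j)"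
      using H(3) Suc.prems(1) unfolding Hs'_def by (auto simp: le_diff_conv)
    moreover have "\<forall>j<Suc m. Hs' j \<subseteq> Hs' (Suc j) \<and> dim (Hs' (Suc j)) = dim (Hs' j) + 1"
    proof (intro allI impI)
      fix j assume "j < Suc m"
      then show "Hs' j \<subseteq> Hs' (Suc j) \<and> dim (Hs' (Suc j)) = dim (Hs' j) + 1"
        using H(1,4) chief_factorD(3)[OF Z'] dim_Z' unfolding Hs'_def by (cases j) auto
    qed
    moreover have "Hs' 0 = Z" "Hs' (Suc m) = UNIV" using H(2) unfolding Hs'_def by auto
    ultimately show ?case unfolding unit_ideal_chain_def by blast
  qed
  then show ?thesis using J by blast
qed

text \<open>On a one-dimensional factor \<open>B / A\<close> of ideals every \<open>br a\<close> acts by a scalar, so the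
  derived algebra acts trivially.\<close>

lemma ideal_span_insert_scalar_action:
  assumes A: "ideal A" and B: "ideal B" "B = span (insert v A)"
  shows "\<exists>c. \<forall>w\<in>B. br a w - scale c w \<in> A"
proof -
  have sA: "subspace A" using ideal_subspace[OF A] .
  have "br a v \<in> B" using ideal_br_in[OF B(1)] B(2) span_base by (metis insertI1)
  then obtain c where c: "br a v - scale c v \<in> A"
    using B(2) span_insert_subspace_mem[OF sA] by blast
  have "br a w - scale c w \<in> A" if w: "w \<in> B" for w
  proof -
    obtain t where t: "w - scale t v \<in> A" using w B(2) span_insert_subspace_mem[OF sA] by blast
    define u where "u = w - scale t v"
    have "br a w - scale c w = (br a u - scale c u) + scale t (br a v - scale c v)"
      unfolding u_def by (simp add: br_diff_right br_scale_right scale_right_diff_distrib algebra_simps)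
    moreover have "br a u - scale c u \<in> A"
      using t u_def ideal_br_in[OF A] sA by (meson subspace_diff subspace_scale)
    ultimately show ?thesis using c sA by (metis subspace_add subspace_scale)
  qed
  then show ?thesis by blast
qed

lemma ideal_span_insert_br_br_in:
  assumes A: "ideal A" and B: "ideal B" "B = span (insert v A)" and w: "w \<in> B"
  shows "br (br a b) w \<in> A"
proof -
  obtain ca where "\<forall>w\<in>B. br a w - scale ca w \<in> A"
    using ideal_span_insert_scalar_action[OF assms(1-3)] by blast
  moreover obtain cb where "\<forall>w\<in>B. br b w - scale cb w \<in> A"
    using ideal_span_insert_scalar_action[OF assms(1-3)] by blast
  ultimately obtain r1 r2 where r: "r1 \<in> A" "r2 \<in> A" "br a w = r2 + scale ca w" "br b w = r1 + scale cb w"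
    using w by (metis diff_add_cancel)
  have "br (br a b) w = br a (br b w) - br b (br a w)"
    using br_jacobi[of a b w] by simp
  also have "\<dots> = br a r1 + scale cb r2 - br b r2 - scale ca r1"
    by (simp add: r(3,4) br_add_right br_scale_right scale_right_distrib algebra_simps)
  finally show ?thesis
    using r(1,2) ideal_br_in[OF A] ideal_subspace[OF A] by (metis subspace_add subspace_diff subspace_scale)
qed

section \<open>Generalized eigenspaces modulo an ideal\<close>

definition ad_shift :: "'b \<Rightarrow> 'a \<Rightarrow> 'b \<Rightarrow> 'b" where
  "ad_shift x c v = br x v - scale c v"

lemma linear_ad_shift: "linear_endo (ad_shift x c)"
  unfolding ad_shift_def
  by (simp add: Vector_Spaces.linear_iff vector_space_axioms br_add_right br_scale_right
      scale_right_distrib algebra_simps)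

lemma ad_shift_zero: "ad_shift x 0 = br x"
  by (simp add: ad_shift_def fun_eq_iff)

lemma ad_shift_change: "ad_shift x d u = ad_shift x l u + scale (l - d) u"
  by (simp add: ad_shift_def scale_left_diff_distrib algebra_simps)

lemma ad_shift_commute: "ad_shift x c (ad_shift x d v) = ad_shift x d (ad_shift x c v)"
  by (simp add: ad_shift_def br_diff_right br_scale_right algebra_simps)

lemma ad_shift_in_ideal: "ideal K \<Longrightarrow> u \<in> K \<Longrightarrow> ad_shift x c u \<in> K"
  unfolding ad_shift_def by (meson ideal_br_in ideal_subspace subspace_diff subspace_scale)

lemma ad_shift_funpow_in_ideal: "ideal K \<Longrightarrow> u \<in> K \<Longrightarrow> (ad_shift x c ^^ n) u \<in> K"
  by (rule funpow_closed[of K]) (auto intro: ad_shift_in_ideal)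

lemma ad_shift_br: "ad_shift x (a + b) (br u v) = br (ad_shift x a u) v + br u (ad_shift x b v)"
  unfolding ad_shift_def
  by (simp add: br_jacobi[of x u v] br_diff_left br_diff_right br_scale_left br_scale_right
      scale_left_distrib algebra_simps)

lemma ad_shift_funpow_br_in_ideal:
  assumes K: "ideal K"
  shows "(ad_shift x a ^^ m) u \<in> K \<Longrightarrow> (ad_shift x b ^^ m') v \<in> K \<Longrightarrow>
    (ad_shift x (a + b) ^^ (m + m')) (br u v) \<in> K"
proof (induction "m + m'" arbitrary: m m' u v rule: less_induct)
  case less
  show ?case
  proof (cases "m = 0 \<or> m' = 0")
    case True
    then have "br u v \<in> K" using less.prems ideal_br_in[OF K] ideal_br_in_left[OF K] by auto
    then show ?thesis by (rule ad_shift_funpow_in_ideal[OF K])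
  next
    case False
    then obtain p q where m: "m = Suc p" and m': "m' = Suc q" by (meson not0_implies_Suc)
    have "(ad_shift x (a + b) ^^ (p + m')) (br (ad_shift x a u) v) \<in> K"
      using less.hyps[of p m' "ad_shift x a u" v] less.prems m by (simp add: funpow_swap1)
    moreover have "(ad_shift x (a + b) ^^ (p + m')) (br u (ad_shift x b v)) \<in> K"
      using less.hyps[of m q u "ad_shift x b v"] less.prems m m' by (simp add: funpow_swap1)
    ultimately have "(ad_shift x (a + b) ^^ (p + m')) (ad_shift x (a + b) (br u v)) \<in> K"
      unfolding ad_shift_br linear_add[OF linear_funpow[OF linear_ad_shift]]
      by (rule subspace_add[OF ideal_subspace[OF K]])
    then show ?thesis unfolding m by (simp add: funpow_swap1)
  qed
qed

definition gen_eigenspace :: "'b \<Rightarrow> 'b set \<Rightarrow> 'a \<Rightarrow> 'b set" where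
  "gen_eigenspace x K c = {v. \<exists>n. (ad_shift x c ^^ n) v \<in> K}"

lemma subspace_gen_eigenspace:
  assumes K: "ideal K"
  shows "subspace (gen_eigenspace x K c)"
  unfolding subspace_def gen_eigenspace_def
proof (intro conjI ballI allI; clarsimp)
  show "\<exists>n. (ad_shift x c ^^ n) 0 \<in> K"
    using linear_0[OF linear_funpow[OF linear_ad_shift]] subspace_0[OF ideal_subspace[OF K]] by auto
  fix u v n1 n2
  assume n: "(ad_shift x c ^^ n1) u \<in> K" "(ad_shift x c ^^ n2) v \<in> K"
  have "(ad_shift x c ^^ (n1 + n2)) u \<in> K"
    unfolding add.commute[of n1 n2] funpow_add o_apply by (rule ad_shift_funpow_in_ideal[OF K n(1)])
  moreover have "(ad_shift x c ^^ (n1 + n2)) v \<in> K"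
    unfolding funpow_add o_apply by (rule ad_shift_funpow_in_ideal[OF K n(2)])
  ultimately have "(ad_shift x c ^^ (n1 + n2)) (u + v) \<in> K"
    by (simp add: linear_add[OF linear_funpow[OF linear_ad_shift]] subspace_add[OF ideal_subspace[OF K]])
  then show "\<exists>n. (ad_shift x c ^^ n) (u + v) \<in> K" ..
next
  fix a u n assume "(ad_shift x c ^^ n) u \<in> K"
  then have "(ad_shift x c ^^ n) (scale a u) \<in> K"
    using linear_scale[OF linear_funpow[OF linear_ad_shift]] ideal_subspace[OF K] subspace_scale by metis
  then show "\<exists>n. (ad_shift x c ^^ n) (scale a u) \<in> K" ..
qed

lemma subset_gen_eigenspace: "K \<subseteq> gen_eigenspace x K c"
  unfolding gen_eigenspace_def by (auto intro: exI[of _ 0])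

lemma ad_shift_mem_gen_eigenspace_iff:
  assumes K: "ideal K"
  shows "ad_shift x c u \<in> gen_eigenspace x K c \<longleftrightarrow> u \<in> gen_eigenspace x K c"
proof
  assume "ad_shift x c u \<in> gen_eigenspace x K c"
  then obtain n where "(ad_shift x c ^^ Suc n) u \<in> K"
    unfolding gen_eigenspace_def by (auto simp only: funpow_Suc_right o_apply)
  then show "u \<in> gen_eigenspace x K c" unfolding gen_eigenspace_def by blast
next
  assume "u \<in> gen_eigenspace x K c"
  then obtain n where "(ad_shift x c ^^ n) u \<in> K" unfolding gen_eigenspace_def by blast
  then have "ad_shift x c ((ad_shift x c ^^ n) u) \<in> K" by (rule ad_shift_in_ideal[OF K])
  then have "(ad_shift x c ^^ n) (ad_shift x c u) \<in> K" by (simp only: funpow_swap1)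
  then show "ad_shift x c u \<in> gen_eigenspace x K c" unfolding gen_eigenspace_def by blast
qed

lemma ad_shift_gen_eigenspace:
  assumes K: "ideal K" and u: "u \<in> gen_eigenspace x K d"
  shows "ad_shift x l u \<in> gen_eigenspace x K d"
proof -
  have "ad_shift x l u = ad_shift x d u - scale (l - d) u"
    using ad_shift_change[of x d u l] by simp
  moreover have "ad_shift x d u \<in> gen_eigenspace x K d"
    using ad_shift_mem_gen_eigenspace_iff[OF K] u by blast
  ultimately show ?thesis
    using u subspace_gen_eigenspace[OF K] by (simp add: subspace_diff subspace_scale)
qed

lemma br_gen_eigenspace:
  assumes K: "ideal K" and "u \<in> gen_eigenspace x K a" "v \<in> gen_eigenspace x K b"
  shows "br u v \<in> gen_eigenspace x K (a + b)"
  using assms ad_shift_funpow_br_in_ideal[OF K] unfolding gen_eigenspace_def by blast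

lemma ad_shift_injective_mod_gen_eigenspace:
  assumes K: "ideal K" and "d \<noteq> l" and u: "u \<in> gen_eigenspace x K d" and "ad_shift x l u \<in> K"
  shows "u \<in> K"
proof -
  have sK: "subspace K" using ideal_subspace[OF K] .
  define s where "s = l - d"
  have "s \<noteq> 0" using \<open>d \<noteq> l\<close> s_def by simp
  have "(ad_shift x d ^^ n) u - scale (s ^ n) u \<in> K" for n
  proof (induction n)
    case 0
    then show ?case using subspace_0[OF sK] by simp
  next
    case (Suc n)
    define k where "k = (ad_shift x d ^^ n) u - scale (s ^ n) u"
    have "(ad_shift x d ^^ n) u = k + scale (s ^ n) u" unfolding k_def by simp
    then have "(ad_shift x d ^^ Suc n) u = ad_shift x d k + scale (s ^ n) (ad_shift x l u + scale s u)"
      by (simp add: linear_add[OF linear_ad_shift] linear_scale[OF linear_ad_shift]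
          ad_shift_change[of x d u l] s_def)
    then have "(ad_shift x d ^^ Suc n) u - scale (s ^ Suc n) u = ad_shift x d k + scale (s ^ n) (ad_shift x l u)"
      by (simp add: scale_right_distrib mult.commute)
    moreover have "ad_shift x d k \<in> K" using ad_shift_in_ideal[OF K] Suc k_def by blast
    moreover have "scale (s ^ n) (ad_shift x l u) \<in> K" using assms(4) subspace_scale[OF sK] by blast
    ultimately show ?case using subspace_add[OF sK] by simp
  qed
  moreover obtain n where "(ad_shift x d ^^ n) u \<in> K" using u unfolding gen_eigenspace_def by auto
  ultimately have "(ad_shift x d ^^ n) u - ((ad_shift x d ^^ n) u - scale (s ^ n) u) \<in> K"
    using subspace_diff[OF sK] by blast
  then have "scale (s ^ n) u \<in> K" by simp
  then have "scale (inverse (s ^ n)) (scale (s ^ n) u) \<in> K" using subspace_scale[OF sK] by blast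
  then show ?thesis using \<open>s \<noteq> 0\<close> by simp
qed

fun ad_prod :: "'b \<Rightarrow> 'a list \<Rightarrow> 'b \<Rightarrow> 'b" where
  "ad_prod x [] v = v"
| "ad_prod x (c # cs) v = ad_shift x c (ad_prod x cs v)"

lemma linear_ad_prod: "linear_endo (ad_prod x cs)"
  by (induction cs)
     (simp_all add: linear_id[unfolded id_def] linear_ad_shift
       Vector_Spaces.linear_compose[of scale scale _ scale, unfolded o_def])

lemma ad_prod_append: "ad_prod x (cs @ ds) v = ad_prod x cs (ad_prod x ds v)"
  by (induction cs) auto

lemma ad_prod_commute: "ad_prod x cs (ad_prod x ds v) = ad_prod x ds (ad_prod x cs v)"
proof -
  have "ad_prod x cs (ad_shift x d v) = ad_shift x d (ad_prod x cs v)" for d v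
    by (induction cs) (auto simp: ad_shift_commute)
  then show ?thesis by (induction ds) auto
qed

lemma ad_prod_in_ideal: "ideal K \<Longrightarrow> u \<in> K \<Longrightarrow> ad_prod x cs u \<in> K"
  by (induction cs) (auto intro: ad_shift_in_ideal)

lemma ad_prod_replicate: "ad_prod x (replicate n c) v = (ad_shift x c ^^ n) v"
  by (induction n) auto

definition no_eigenvector_mod :: "'b \<Rightarrow> 'b set \<Rightarrow> 'b set \<Rightarrow> bool" where
  "no_eigenvector_mod x K H \<longleftrightarrow> (\<forall>c. \<forall>h\<in>H. ad_shift x c h \<in> K \<longrightarrow> h \<in> K)"

lemma ad_prod_injective_mod:
  assumes H: "ideal H" and "no_eigenvector_mod x K H"
  shows "h \<in> H \<Longrightarrow> ad_prod x cs h \<in> K \<Longrightarrow> h \<in> K"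
  using assms(2) unfolding no_eigenvector_mod_def
  by (induction cs) (auto intro: ad_prod_in_ideal[OF H])

definition gen_eigenspace_sum :: "'b \<Rightarrow> 'b set \<Rightarrow> 'b set" where
  "gen_eigenspace_sum x K = span (\<Union>c. gen_eigenspace x K c)"

lemma gen_eigenspace_subset_sum: "gen_eigenspace x K c \<subseteq> gen_eigenspace_sum x K"
  unfolding gen_eigenspace_sum_def using span_superset by blast

lemma gen_eigenspace_sum_annihilated:
  assumes K: "ideal K" and w: "w \<in> gen_eigenspace_sum x K"
  shows "\<exists>cs. ad_prod x cs w \<in> K"
  using w unfolding gen_eigenspace_sum_def
proof (induction rule: span_induct)
  case base
  have sK: "subspace K" using ideal_subspace[OF K] .
  show ?case
    unfolding subspace_def
  proof (intro conjI ballI allI; clarsimp)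
    show "\<exists>cs. ad_prod x cs 0 \<in> K"
      using linear_0[OF linear_ad_prod] subspace_0[OF sK] by auto
    fix u v cs ds assume "ad_prod x cs u \<in> K" "ad_prod x ds v \<in> K"
    then have "ad_prod x ds (ad_prod x cs u) + ad_prod x cs (ad_prod x ds v) \<in> K"
      by (simp add: ad_prod_in_ideal[OF K] subspace_add[OF sK])
    then have "ad_prod x (cs @ ds) (u + v) \<in> K"
      by (simp add: ad_prod_append linear_add[OF linear_ad_prod] ad_prod_commute[of x cs ds u])
    then show "\<exists>cs. ad_prod x cs (u + v) \<in> K" ..
  next
    fix a u cs assume "ad_prod x cs u \<in> K"
    then have "ad_prod x cs (scale a u) \<in> K"
      by (simp add: linear_scale[OF linear_ad_prod] subspace_scale[OF sK])
    then show "\<exists>cs. ad_prod x cs (scale a u) \<in> K" ..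
  qed
next
  case (step u)
  then obtain c n where "(ad_shift x c ^^ n) u \<in> K" unfolding gen_eigenspace_def by blast
  then show ?case by (metis ad_prod_replicate)
qed

lemma gen_eigenspace_sum_subset_ad_shift_image_plus:
  assumes K: "ideal K"
  shows "gen_eigenspace_sum x K \<subseteq> ad_shift x l ` gen_eigenspace_sum x K + gen_eigenspace x K l"
proof
  let ?R = "ad_shift x l ` gen_eigenspace_sum x K + gen_eigenspace x K l"
  fix w assume "w \<in> gen_eigenspace_sum x K"
  then have "w \<in> span (\<Union>c. gen_eigenspace x K c)" by (simp add: gen_eigenspace_sum_def)
  then show "w \<in> ?R"
  proof (induction rule: span_induct)
    case base
    show ?case
      using subspace_set_plus[OF linear_subspace_image[OF linear_ad_shift subspace_span]
          subspace_gen_eigenspace[OF K]]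
      by (simp add: gen_eigenspace_sum_def)
  next
    case (step u)
    then obtain d where d: "u \<in> gen_eigenspace x K d" by blast
    show ?case
    proof (cases "d = l")
      case True
      have "ad_shift x l 0 + u \<in> ?R"
        using d True span_zero by (intro set_plus_intro) (auto simp: gen_eigenspace_sum_def)
      then show ?thesis by (simp add: linear_0[OF linear_ad_shift])
    next
      case False
      text \<open>On the eigenvalue-\<open>d\<close> part \<open>ad_shift x l\<close> is invertible modulo \<open>K\<close>.\<close>
      have "\<exists>u'\<in>gen_eigenspace x K d. u - ad_shift x l u' \<in> K"
        by (rule injective_mod_imp_surjective_mod[OF linear_ad_shift subspace_gen_eigenspace[OF K]
              ideal_subspace[OF K] subset_gen_eigenspace _ _ d])
           (erule ad_shift_gen_eigenspace[OF K],
            erule (1) ad_shift_injective_mod_gen_eigenspace[OF K False])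
      then obtain u' where "u' \<in> gen_eigenspace x K d" "u - ad_shift x l u' \<in> K" by blast
      then have "ad_shift x l u' + (u - ad_shift x l u') \<in> ?R"
        using gen_eigenspace_subset_sum subset_gen_eigenspace by (intro set_plus_intro) blast+
      then show ?thesis by simp
    qed
  qed
qed

lemma br_span_in:
  assumes "\<And>a b. a \<in> A \<Longrightarrow> b \<in> B \<Longrightarrow> br a b \<in> C" "subspace C" "x \<in> span A" "y \<in> span B"
  shows "br x y \<in> C"
proof -
  have sub: "subspace {x. \<forall>y\<in>span B. br x y \<in> C}"
    using assms(2) by (auto simp: subspace_def br_add_left br_scale_left)
  have base: "\<forall>y\<in>span B. br a y \<in> C" if "a \<in> A" for a
  proof
    fix y assume "y \<in> span B"
    then show "br a y \<in> C"
    proof (induction rule: span_induct)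
      case base
      show ?case using assms(2) by (auto simp: subspace_def br_add_right br_scale_right)
    qed (use assms(1) that in auto)
  qed
  have "\<forall>y\<in>span B. br x y \<in> C" by (rule span_induct[OF assms(3) sub]) (rule base)
  then show ?thesis using assms(4) by blast
qed

lemma subalg_gen_eigenspace_sum:
  assumes K: "ideal K"
  shows "subalg (gen_eigenspace_sum x K)"
  unfolding lie_subalgebra_def
proof (intro conjI ballI)
  show "subspace (gen_eigenspace_sum x K)" by (simp add: gen_eigenspace_sum_def)
  fix a b assume ab: "a \<in> gen_eigenspace_sum x K" "b \<in> gen_eigenspace_sum x K"
  show "br a b \<in> gen_eigenspace_sum x K"
  proof (rule br_span_in[of "\<Union>c. gen_eigenspace x K c" "\<Union>c. gen_eigenspace x K c"])
    fix u v assume "u \<in> (\<Union>c. gen_eigenspace x K c)" "v \<in> (\<Union>c. gen_eigenspace x K c)"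
    then obtain c d where "u \<in> gen_eigenspace x K c" "v \<in> gen_eigenspace x K d" by blast
    then have "br u v \<in> gen_eigenspace x K (c + d)" by (rule br_gen_eigenspace[OF K])
    then show "br u v \<in> gen_eigenspace_sum x K" using gen_eigenspace_subset_sum by blast
  qed (use ab in \<open>simp_all add: gen_eigenspace_sum_def\<close>)
qed

lemma gen_eigenspace_sum_Int_subset:
  assumes K: "ideal K" and H: "ideal H"
    and no_eigen: "no_eigenvector_mod x K H"
  shows "gen_eigenspace_sum x K \<inter> H \<subseteq> K"
proof
  fix h assume h: "h \<in> gen_eigenspace_sum x K \<inter> H"
  then obtain cs where "ad_prod x cs h \<in> K"
    using gen_eigenspace_sum_annihilated[OF K] by blast
  then show "h \<in> K"
    using ad_prod_injective_mod[OF H no_eigen] h by blast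
qed

lemma ad_shift_preimage_gen_eigenspace_sum_plus:
  assumes K: "ideal K" and H: "ideal H" "K \<subseteq> H"
    and no_eigen: "no_eigenvector_mod x K H"
    and v: "ad_shift x l v \<in> gen_eigenspace_sum x K + H"
  shows "v \<in> gen_eigenspace_sum x K + H"
proof -
  let ?W = "gen_eigenspace_sum x K"
  obtain w h where wh: "w \<in> ?W" "h \<in> H" "ad_shift x l v = w + h"
    using v by (auto elim!: set_plus_elim)
  obtain h' where h': "h' \<in> H" "h - ad_shift x l h' \<in> K"
    using injective_mod_imp_surjective_mod[OF linear_ad_shift ideal_subspace[OF H(1)]
        ideal_subspace[OF K] H(2) _ _ wh(2), of x l]
      ad_shift_in_ideal[OF H(1)] no_eigen unfolding no_eigenvector_mod_def by blast
  obtain w' g where w': "w' \<in> ?W" "g \<in> gen_eigenspace x K l" "w = ad_shift x l w' + g"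
    using gen_eigenspace_sum_subset_ad_shift_image_plus[OF K] wh(1) by (blast elim: set_plus_elim)
  define z where "z = v - h' - w'"
  have "ad_shift x l z = g + (h - ad_shift x l h')"
    unfolding z_def using wh(3) w'(3)
    by (simp add: linear_diff[OF linear_ad_shift] linear_add[OF linear_ad_shift] algebra_simps)
  moreover have "h - ad_shift x l h' \<in> gen_eigenspace x K l"
    using h'(2) subset_gen_eigenspace by blast
  ultimately have "ad_shift x l z \<in> gen_eigenspace x K l"
    using w'(2) subspace_add[OF subspace_gen_eigenspace[OF K]] by simp
  then have "z \<in> ?W"
    using ad_shift_mem_gen_eigenspace_iff[OF K] gen_eigenspace_subset_sum by blast
  then have "z + w' \<in> ?W" using w'(1) by (simp add: gen_eigenspace_sum_def span_add)
  then show ?thesis using set_plus_intro[OF _ h'(1), of "z + w'" ?W] unfolding z_def by simp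
qed

lemma gen_eigenspace_sum_plus_eq_UNIV:
  assumes K: "ideal K" and H: "ideal H" "K \<subseteq> H"
    and chain: "Hs 0 = H" "Hs m = UNIV" "\<forall>j\<le>m. ideal (Hs j)"
      "\<forall>j<m. Hs j \<subseteq> Hs (Suc j) \<and> dim (Hs (Suc j)) = dim (Hs j) + 1"
    and no_eigen: "no_eigenvector_mod x K H"
  shows "gen_eigenspace_sum x K + H = UNIV"
proof -
  let ?S = "gen_eigenspace_sum x K + H"
  have sS: "subspace ?S"
    using subspace_set_plus ideal_subspace[OF H(1)] by (simp add: gen_eigenspace_sum_def)
  have "Hs j \<subseteq> ?S" if "j \<le> m" for j
    using that
  proof (induction j)
    case 0
    then show ?case
      using chain(1) subspace_subset_set_plus_right by (simp add: gen_eigenspace_sum_def)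
  next
    case (Suc j)
    then have j: "j < m" by simp
    have sj: "subspace (Hs j)" and ij1: "ideal (Hs (Suc j))"
      using chain(3) j ideal_subspace by auto
    obtain v where v: "v \<in> Hs (Suc j)" "Hs (Suc j) = span (insert v (Hs j))"
      using dim_Suc_imp_span_insert[OF sj ideal_subspace[OF ij1]] chain(4) j by blast
    have "br x v \<in> span (insert v (Hs j))" using ideal_br_in[OF ij1 v(1)] v(2) by simp
    then obtain l where "ad_shift x l v \<in> Hs j"
      using span_insert_subspace_mem[OF sj] unfolding ad_shift_def by blast
    then have "ad_shift x l v \<in> ?S" using Suc j by auto
    then have "v \<in> ?S"
      by (rule ad_shift_preimage_gen_eigenspace_sum_plus[OF K H no_eigen])
    then have "insert v (Hs j) \<subseteq> ?S" using Suc j by auto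
    then show ?case using v(2) span_minimal[OF _ sS] by simp
  qed
  then show ?thesis using chain(2) by blast
qed

lemma gen_eigenspace_zero_plus_eq_UNIV:
  assumes K: "ideal K" and H: "ideal H" "K \<subseteq> H" and nil: "\<And>v. (br x ^^ m) v \<in> H"
  shows "gen_eigenspace x K 0 + H = UNIV"
proof -
  obtain N where N: "\<forall>k. \<forall>u\<in>H. \<exists>u'\<in>H. (br x ^^ N) u - (br x ^^ (N + k)) u' \<in> K"
    using fitting_image_stabilizes_funpow[OF linear_br_right ideal_subspace[OF H(1)]
        ideal_subspace[OF K] H(2) ideal_br_in[OF H(1)] ideal_br_in[OF K]] by blast
  have "v \<in> gen_eigenspace x K 0 + H" for v
  proof -
    obtain u' where u': "u' \<in> H" "(br x ^^ N) ((br x ^^ m) v) - (br x ^^ (N + m)) u' \<in> K"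
      using N nil by blast
    have "(br x ^^ (N + m)) (v - u') = (br x ^^ N) ((br x ^^ m) v) - (br x ^^ (N + m)) u'"
      by (simp only: linear_diff[OF linear_funpow[OF linear_br_right]] funpow_add o_apply)
    then have "(br x ^^ (N + m)) (v - u') \<in> K" using u'(2) by simp
    then have "v - u' \<in> gen_eigenspace x K 0" unfolding gen_eigenspace_def ad_shift_zero by blast
    then show ?thesis using set_plus_intro[OF _ u'(1)] by fastforce
  qed
  then show ?thesis by blast
qed

section \<open>Engel's theorem modulo an ideal\<close>

lemma subalg_plus_span_normalizing:
  assumes P: "subalg P" and s0: "\<forall>p\<in>P. br p s0 \<in> P"
  shows "subalg (P + span {s0})"
  unfolding lie_subalgebra_def
proof (intro conjI ballI)
  have sP: "subspace P" using subalg_subspace[OF P] .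
  show "subspace (P + span {s0})" using subspace_set_plus[OF sP] by simp
  fix a b assume "a \<in> P + span {s0}" "b \<in> P + span {s0}"
  then obtain p q t r where pq: "p \<in> P" "a = p + scale t s0" "q \<in> P" "b = q + scale r s0"
    unfolding span_singleton by (auto elim!: set_plus_elim)
  have "br a b = br p q + scale r (br p s0) - scale t (br q s0)"
    unfolding pq(2,4)
    by (simp add: br_add_left br_add_right br_scale_left br_scale_right br_anticomm[of s0 q] algebra_simps)
  moreover have "br p q \<in> P" "br p s0 \<in> P" "br q s0 \<in> P"
    using subalg_br_in[OF P] pq s0 by auto
  ultimately have "br a b \<in> P" using sP by (simp add: subspace_diff subspace_add subspace_scale)
  then show "br a b \<in> P + span {s0}" using subspace_subset_set_plus_left[of "span {s0}" P] by auto
qed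

lemma normalizer_null_vector:
  assumes sK': "subspace K'" and s0: "\<forall>p\<in>P. br p s0 \<in> P"
    and s0_V: "\<forall>v\<in>V. br s0 v \<in> V" and s0_K': "\<forall>v\<in>K'. br s0 v \<in> K'"
    and v1: "v1 \<in> V" "v1 \<notin> K'" "\<forall>p\<in>P. br p v1 \<in> K'" and nil: "(br s0 ^^ n) v1 \<in> K'"
  shows "\<exists>w\<in>V. w \<notin> K' \<and> br s0 w \<in> K' \<and> (\<forall>p\<in>P. br p w \<in> K')"
proof -
  define V0 where "V0 = {v \<in> V. \<forall>p\<in>P. br p v \<in> K'}"
  text \<open>Since \<open>s0\<close> normalizes \<open>P\<close>, the \<open>P\<close>-null vectors modulo \<open>K'\<close> are \<open>br s0\<close>-invariant.\<close>
  have "br s0 u \<in> V0" if "u \<in> V0" for u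
  proof -
    have "br p (br s0 u) \<in> K'" if "p \<in> P" for p
    proof -
      have "br (br p s0) u \<in> K'" using s0 that \<open>u \<in> V0\<close> V0_def by blast
      moreover have "br s0 (br p u) \<in> K'" using s0_K' that \<open>u \<in> V0\<close> V0_def by blast
      ultimately show ?thesis unfolding br_jacobi[of p s0 u] by (rule subspace_add[OF sK'])
    qed
    then show ?thesis using s0_V that V0_def by blast
  qed
  then obtain w where "w \<in> V0" "w \<notin> K'" "br s0 w \<in> K'"
    using funpow_exit_point[of V0 "br s0" v1 K' n] v1 nil V0_def by blast
  then show ?thesis using V0_def by blast
qed

text \<open>The induction goes through a maximal subalgebra \<open>P\<close> of \<open>S\<close> containing \<open>K\<close>, which
  turns out to have codimension one.\<close>

lemma engel_mod:
  assumes K: "ideal K"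
  shows "subalg S \<Longrightarrow> K \<subseteq> S \<Longrightarrow> \<forall>s\<in>S. \<forall>v. \<exists>n. (br s ^^ n) v \<in> K \<Longrightarrow>
    subspace V \<Longrightarrow> subspace K' \<Longrightarrow> K \<subseteq> K' \<Longrightarrow> K' \<subset> V \<Longrightarrow>
    \<forall>s\<in>S. \<forall>v\<in>V. br s v \<in> V \<Longrightarrow> \<forall>s\<in>S. \<forall>v\<in>K'. br s v \<in> K' \<Longrightarrow>
    \<exists>v\<in>V. v \<notin> K' \<and> (\<forall>s\<in>S. br s v \<in> K')"
proof (induction "dim S" arbitrary: S V K' rule: less_induct)
  case less
  note S = less.prems(1) and KS = less.prems(2) and nilS = less.prems(3) and sV = less.prems(4)
    and sK' = less.prems(5) and KK' = less.prems(6) and K'V = less.prems(7) and SV = less.prems(8)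
    and SK' = less.prems(9)
  show ?case
  proof (cases "S \<subseteq> K")
    case True
    obtain v where "v \<in> V" "v \<notin> K'" using K'V by blast
    moreover have "\<forall>s\<in>S. br s v \<in> K'" using True ideal_br_in_left[OF K] KK' by blast
    ultimately show ?thesis by blast
  next
    case False
    have sS: "subspace S" using subalg_subspace[OF S] .
    obtain P where P: "subalg P" "K \<subseteq> P" "P \<subset> S"
      and greatest: "\<And>Z. subalg Z \<and> K \<subseteq> Z \<and> Z \<subset> S \<Longrightarrow> dim Z \<le> dim P"
      using ex_dim_max[of "\<lambda>Z. subalg Z \<and> K \<subseteq> Z \<and> Z \<subset> S" K] ideal_subalg[OF K] KS False by blast
    have sP: "subspace P" using subalg_subspace[OF P(1)] .
    have dP: "dim P < dim S" using dim_psubset_subspace[OF sP sS P(3)] .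
    have nilP: "\<forall>s\<in>P. \<forall>v. \<exists>n. (br s ^^ n) v \<in> K" using nilS P(3) by blast
    text \<open>The induction hypothesis for \<open>P\<close> acting on \<open>S / P\<close> yields \<open>s0\<close> normalizing \<open>P\<close>.\<close>
    have "\<forall>p\<in>P. \<forall>v\<in>S. br p v \<in> S" "\<forall>p\<in>P. \<forall>v\<in>P. br p v \<in> P"
      using P(3) subalg_br_in[OF S] subalg_br_in[OF P(1)] by blast+
    then obtain s0 where s0: "s0 \<in> S" "s0 \<notin> P" "\<forall>p\<in>P. br p s0 \<in> P"
      using less.hyps[OF dP P(1,2) nilP sS sP P(2,3)] by blast
    have S_eq: "S = P + span {s0}"
    proof (rule ccontr)
      assume "S \<noteq> P + span {s0}"
      moreover have "P + span {s0} \<subseteq> S"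
        using P(3) s0(1) span_minimal[OF _ sS, of "{s0}"] sS by (intro set_plus_subset_subspace) auto
      moreover have "P \<subset> P + span {s0}"
        using subspace_subset_set_plus_left[of "span {s0}" P]
          subspace_subset_set_plus_right[OF sP, of "span {s0}"] span_base[of s0 "{s0}"] s0(2) by auto
      ultimately have "dim (P + span {s0}) \<le> dim P" "dim P < dim (P + span {s0})"
        using greatest subalg_plus_span_normalizing[OF P(1) s0(3)] P(2)
          dim_psubset_subspace[OF sP subspace_set_plus[OF sP subspace_span]] by blast+
      then show False by simp
    qed
    have "\<forall>p\<in>P. \<forall>v\<in>V. br p v \<in> V" "\<forall>p\<in>P. \<forall>v\<in>K'. br p v \<in> K'"
      using SV SK' P(3) by blast+
    then obtain v1 where v1: "v1 \<in> V" "v1 \<notin> K'" "\<forall>p\<in>P. br p v1 \<in> K'"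
      using less.hyps[OF dP P(1,2) nilP sV sK' KK' K'V] by blast
    obtain n where "(br s0 ^^ n) v1 \<in> K'" using nilS s0(1) KK' by blast
    moreover have "\<forall>v\<in>V. br s0 v \<in> V" "\<forall>v\<in>K'. br s0 v \<in> K'" using SV SK' s0(1) by blast+
    ultimately obtain w where w: "w \<in> V" "w \<notin> K'" "br s0 w \<in> K'" "\<forall>p\<in>P. br p w \<in> K'"
      using normalizer_null_vector[OF sK' s0(3) _ _ v1] by blast
    have "br s w \<in> K'" if "s \<in> S" for s
    proof -
      obtain p t where "p \<in> P" "s = p + scale t s0"
        using \<open>s \<in> S\<close> unfolding S_eq span_singleton by (auto elim!: set_plus_elim)
      then show ?thesis
        using w sK' by (auto simp: br_add_left br_scale_left intro: subspace_add subspace_scale)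
    qed
    then show ?thesis using w by blast
  qed
qed

section \<open>Chief factors in the Frattini subalgebra\<close>

definition derived :: "'b set" where
  "derived = span {z. \<exists>a b. z = br a b}"

lemma br_in_derived: "br a b \<in> derived"
  unfolding derived_def by (rule span_base) blast

definition in_frattini_mod :: "'b set \<Rightarrow> 'b set \<Rightarrow> bool" where
  "in_frattini_mod K H \<longleftrightarrow> (\<forall>S. subalg S \<longrightarrow> K \<subseteq> S \<longrightarrow> S + H = UNIV \<longrightarrow> S = UNIV)"

lemma in_frattini_modI:
  assumes "\<And>M. max_subalg M \<Longrightarrow> K \<subseteq> M \<Longrightarrow> H \<subseteq> M"
  shows "in_frattini_mod K H"
  unfolding in_frattini_mod_def
proof (intro allI impI)
  fix S assume S: "subalg S" "K \<subseteq> S" "S + H = UNIV"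
  show "S = UNIV"
  proof (rule ccontr)
    assume "S \<noteq> UNIV"
    then obtain M where M: "max_subalg M" "S \<subseteq> M" using max_subalg_exists[OF S(1)] by blast
    then have "S + H \<subseteq> M"
      using assms S(2) max_subalg_subspace by (intro set_plus_subset_subspace) auto
    then show False using S(3) max_subalg_neq_UNIV[OF M(1)] by blast
  qed
qed

end

text \<open>A chief factor \<open>H / K\<close> inside the Frattini subalgebra of \<open>L / K\<close>, such that \<open>L / H\<close> is
  supersolvable.\<close>

locale frattini_chief_factor = fin_dim_lie_algebra +
  fixes K H :: "'b set" and m :: nat and Hs :: "nat \<Rightarrow> 'b set"
  assumes chief: "chief_factor K H" and frattini: "in_frattini_mod K H"
    and chain_0: "Hs 0 = H" and chain_top: "Hs m = UNIV" and chain_ideal: "\<forall>j\<le>m. ideal (Hs j)"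
    and chain_step: "\<forall>j<m. Hs j \<subseteq> Hs (Suc j) \<and> dim (Hs (Suc j)) = dim (Hs j) + 1"
begin

lemma ideal_K: "ideal K" and ideal_H: "ideal H" and K_psubset_H: "K \<subset> H"
  using chief_factorD[OF chief] by auto

lemma subspace_K: "subspace K" and subspace_H: "subspace H"
  using ideal_K ideal_H ideal_subspace by auto

lemma frattini_eq_UNIV: "subalg S \<Longrightarrow> K \<subseteq> S \<Longrightarrow> S + H = UNIV \<Longrightarrow> S = UNIV"
  using frattini unfolding in_frattini_mod_def by blast

lemma H_subset_chain: "j \<le> m \<Longrightarrow> H \<subseteq> Hs j"
proof (induction j)
  case (Suc j)
  then have "j < m" by simp
  then show ?case using Suc.IH chain_step by fastforce
qed (simp add: chain_0)

lemma br_derived_plus_chain: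
  assumes j: "j < m" and x: "x \<in> derived + K" and v: "v \<in> Hs (Suc j)"
  shows "br x v \<in> Hs j"
proof -
  have sj: "subspace (Hs j)" and ij: "ideal (Hs j)" and ij1: "ideal (Hs (Suc j))"
    using chain_ideal j ideal_subspace by auto
  obtain v0 where v0: "Hs (Suc j) = span (insert v0 (Hs j))"
    using dim_Suc_imp_span_insert[OF sj ideal_subspace[OF ij1]] chain_step j by blast
  have sub: "subspace {y. br y v \<in> Hs j}"
    using sj by (auto simp: subspace_def br_add_left br_scale_left)
  have derived_v: "br y v \<in> Hs j" if "y \<in> derived" for y
    by (rule span_induct[OF that[unfolded derived_def] sub])
       (auto intro: ideal_span_insert_br_br_in[OF ij ij1 v0 v])
  obtain y k where yk: "y \<in> derived" "k \<in> K" "x = y + k" using x by (auto elim!: set_plus_elim)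
  have "br k v \<in> Hs j"
    using ideal_br_in_left[OF ideal_K yk(2)] H_subset_chain[of j] j K_psubset_H by auto
  then show ?thesis using derived_v[OF yk(1)] yk(3) br_add_left subspace_add[OF sj] by metis
qed

lemma derived_plus_nilpotent_mod_H:
  assumes x: "x \<in> derived + K"
  shows "(br x ^^ m) v \<in> H"
proof -
  have "\<forall>v\<in>Hs j. (br x ^^ j) v \<in> H" if "j \<le> m" for j
    using that
  proof (induction j)
    case (Suc j)
    then show ?case using br_derived_plus_chain[OF _ x] by (simp add: funpow_swap1)
  qed (simp add: chain_0)
  then show ?thesis using chain_top by blast
qed

lemma derived_plus_nilpotent_mod_K:
  assumes x: "x \<in> derived + K"
  shows "\<exists>n. (br x ^^ n) v \<in> K"
proof -
  have "subalg (gen_eigenspace x K 0)"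
    unfolding lie_subalgebra_def using subspace_gen_eigenspace[OF ideal_K]
      br_gen_eigenspace[OF ideal_K, of _ x 0 _ 0] by simp
  moreover have "gen_eigenspace x K 0 + H = UNIV"
    using gen_eigenspace_zero_plus_eq_UNIV[OF ideal_K ideal_H _ derived_plus_nilpotent_mod_H[OF x]]
      K_psubset_H by blast
  ultimately have "gen_eigenspace x K 0 = UNIV"
    using frattini_eq_UNIV subset_gen_eigenspace by blast
  then show ?thesis unfolding gen_eigenspace_def ad_shift_zero by blast
qed

lemma br_br_chief_in_K:
  assumes "h \<in> H"
  shows "br (br a b) h \<in> K"
proof -
  let ?D = "derived + K"
  have sD: "subspace ?D"
    using subspace_set_plus subspace_K by (simp add: derived_def)
  have subalg_D: "subalg ?D"
    unfolding lie_subalgebra_def using sD br_in_derived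
      subspace_subset_set_plus_left[OF subspace_K, of derived] by blast
  have "K \<subseteq> ?D" using subspace_subset_set_plus_right sD by (simp add: derived_def)
  text \<open>By Engel's theorem \<open>?D\<close> kills some \<open>h1 \<in> H - K\<close> modulo \<open>K\<close>; the annihilator of
    \<open>H / K\<close> in \<open>?D\<close> is an ideal, so it is all of \<open>H\<close>.\<close>
  then obtain h1 where h1: "h1 \<in> H" "h1 \<notin> K" "\<forall>s\<in>?D. br s h1 \<in> K"
    using engel_mod[OF ideal_K subalg_D _ _ subspace_H subspace_K _ K_psubset_H]
      derived_plus_nilpotent_mod_K ideal_br_in[OF ideal_H] ideal_br_in[OF ideal_K] by blast
  define H' where "H' = {h \<in> H. \<forall>s\<in>?D. br s h \<in> K}"
  have "ideal H'"
    unfolding lie_ideal_def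
  proof (intro conjI allI ballI)
    show "subspace H'"
      unfolding H'_def using subspace_H subspace_K
      by (auto simp: subspace_def br_add_right br_scale_right)
    fix y h assume h: "h \<in> H'"
    have "br s (br y h) \<in> K" if s: "s \<in> ?D" for s
    proof -
      have "br (br s y) h \<in> K" using h H'_def br_in_derived
          subspace_subset_set_plus_left[OF subspace_K, of derived] by blast
      moreover have "br y (br s h) \<in> K" using h s ideal_br_in[OF ideal_K] H'_def by blast
      ultimately show ?thesis unfolding br_jacobi[of s y h] by (rule subspace_add[OF subspace_K])
    qed
    then show "br y h \<in> H'" using h ideal_br_in[OF ideal_H] unfolding H'_def by blast
  qed
  moreover have "K \<subseteq> H'" unfolding H'_def using K_psubset_H ideal_br_in[OF ideal_K] by blast
  moreover have "H' \<noteq> K" using h1 H'_def by blast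
  ultimately have "H' = H" using chief_factorD(4)[OF chief] H'_def by blast
  then show ?thesis
    using assms br_in_derived subspace_subset_set_plus_left[OF subspace_K, of derived]
    unfolding H'_def by blast
qed

lemma ad_has_eigenvector_mod: "\<exists>c. \<exists>h\<in>H. h \<notin> K \<and> ad_shift x c h \<in> K"
proof (rule ccontr)
  assume "\<not> ?thesis"
  then have no_eigen: "no_eigenvector_mod x K H" unfolding no_eigenvector_mod_def by blast
  have "gen_eigenspace_sum x K + H = UNIV"
    using gen_eigenspace_sum_plus_eq_UNIV[OF ideal_K ideal_H _ chain_0 chain_top chain_ideal
        chain_step no_eigen] K_psubset_H by blast
  then have "gen_eigenspace_sum x K = UNIV"
    using frattini_eq_UNIV subalg_gen_eigenspace_sum[OF ideal_K]
      subset_gen_eigenspace gen_eigenspace_subset_sum by blast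
  then have "H \<subseteq> K" using gen_eigenspace_sum_Int_subset[OF ideal_K ideal_H no_eigen] by blast
  then show False using K_psubset_H by blast
qed

lemma ad_scalar_mod: "\<exists>c. \<forall>h\<in>H. ad_shift x c h \<in> K"
proof -
  obtain c h0 where h0: "h0 \<in> H" "h0 \<notin> K" "ad_shift x c h0 \<in> K"
    using ad_has_eigenvector_mod by blast
  text \<open>The eigenspace is an ideal because \<open>[[x, y], H] \<subseteq> K\<close>.\<close>
  define E where "E = {h \<in> H. ad_shift x c h \<in> K}"
  have "ideal E"
    unfolding lie_ideal_def
  proof (intro conjI allI ballI)
    show "subspace E"
      unfolding E_def using subspace_H subspace_K
      by (auto simp: subspace_def linear_add[OF linear_ad_shift] linear_scale[OF linear_ad_shift]
          linear_0[OF linear_ad_shift])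
    fix y h assume h: "h \<in> E"
    have "ad_shift x c (br y h) = br (br x y) h + br y (ad_shift x c h)"
      unfolding ad_shift_def by (simp add: br_jacobi[of x y h] br_diff_right br_scale_right algebra_simps)
    moreover have "br (br x y) h \<in> K" "br y (ad_shift x c h) \<in> K"
      using h br_br_chief_in_K ideal_br_in[OF ideal_K] unfolding E_def by blast+
    ultimately show "br y h \<in> E"
      using h ideal_br_in[OF ideal_H] subspace_add[OF subspace_K] unfolding E_def by simp
  qed
  moreover have "K \<subseteq> E" unfolding E_def using K_psubset_H ad_shift_in_ideal[OF ideal_K] by blast
  moreover have "E \<noteq> K" using h0 E_def by blast
  ultimately have "E = H" using chief_factorD(4)[OF chief] E_def by blast
  then show ?thesis unfolding E_def by blast
qed

lemma dim_chief_factor: "dim H = dim K + 1"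
proof -
  obtain h0 where h0: "h0 \<in> H" "h0 \<notin> K" using K_psubset_H by blast
  define G where "G = span (insert h0 K)"
  have "ideal G"
    unfolding lie_ideal_def
  proof (intro conjI allI ballI)
    show "subspace G" unfolding G_def by simp
    fix y g assume "g \<in> G"
    then obtain t where t: "g - scale t h0 \<in> K"
      using span_insert_subspace_mem[OF subspace_K] unfolding G_def by blast
    obtain c where c: "\<forall>h\<in>H. ad_shift y c h \<in> K" using ad_scalar_mod by blast
    have "br y g = br y (g - scale t h0) + scale t (ad_shift y c h0) + scale (t * c) h0"
      by (simp add: ad_shift_def br_diff_right br_scale_right scale_right_diff_distrib algebra_simps)
    moreover have "br y (g - scale t h0) + scale t (ad_shift y c h0) \<in> K"
      using ideal_br_in[OF ideal_K t] c h0(1) subspace_K by (simp add: subspace_add subspace_scale)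
    ultimately have "br y g - scale (t * c) h0 \<in> K" by simp
    then show "br y g \<in> G" unfolding G_def span_insert_subspace_mem[OF subspace_K] by blast
  qed
  moreover have "K \<subseteq> G" unfolding G_def using span_superset by blast
  moreover have "G \<subseteq> H" unfolding G_def using h0(1) K_psubset_H subspace_H by (simp add: span_minimal)
  moreover have "G \<noteq> K" using h0 span_base[of h0 "insert h0 K"] unfolding G_def by blast
  ultimately have "G = H" using chief_factorD(4)[OF chief] by blast
  moreover have "dim G = dim K + 1"
    unfolding G_def using fd.dim_insert[of h0 K] span_eq_iff[THEN iffD2, OF subspace_K] h0(2) by simp
  ultimately show ?thesis by simp
qed

end

context fin_dim_lie_algebra
begin

lemma dim_chief_factor_if_ideal_index_one:
  assumes index_one: "\<And>M C. max_subalg M \<Longrightarrow> ideal_compl M C \<Longrightarrow> dim C - dim (core C) = 1"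
  shows "chief_factor K H \<Longrightarrow> dim H = dim K + 1"
proof (induction "dim (UNIV::'b set) - dim K" arbitrary: K H rule: less_induct)
  case less
  note chief = chief_factorD[OF less.prems]
  text \<open>By induction on the codimension, \<open>L / H\<close> is supersolvable.\<close>
  have "unit_ideal_chain H"
  proof (rule unit_ideal_chainI[OF chief(2)])
    fix Z Z' assume "H \<subseteq> Z" "chief_factor Z Z'"
    have "dim K < dim Z"
      using dim_psubset_subspace[OF ideal_subspace[OF chief(1)] ideal_subspace[OF chief(2)] chief(3)]
        fd.dim_subset[OF \<open>H \<subseteq> Z\<close>] by linarith
    moreover have "dim Z \<le> dim (UNIV::'b set)" by (rule fd.dim_subset) simp
    ultimately have "dim (UNIV::'b set) - dim Z < dim (UNIV::'b set) - dim K" by linarith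
    then show "dim Z' = dim Z + 1" using less.hyps \<open>chief_factor Z Z'\<close> by blast
  qed
  then obtain m Hs where chain: "Hs 0 = H" "Hs m = UNIV" "\<forall>j\<le>m. ideal (Hs j)"
    "\<forall>j<m. Hs j \<subseteq> Hs (Suc j) \<and> dim (Hs (Suc j)) = dim (Hs j) + 1"
    unfolding unit_ideal_chain_def by blast
  show ?case
  proof (cases "\<exists>M. max_subalg M \<and> K \<subseteq> M \<and> \<not> H \<subseteq> M")
    case True
    then obtain M where M: "max_subalg M" "K \<subseteq> M" "\<not> H \<subseteq> M" by blast
    show ?thesis by (rule dim_supplemented_chief_factor[OF M(1) index_one[OF M(1)] less.prems M(2,3)])
  next
    case False
    then have "in_frattini_mod K H" by (intro in_frattini_modI) blast
    then interpret frattini_chief_factor scale br K H m Hs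
      by unfold_locales (use less.prems chain in auto)
    show ?thesis by (rule dim_chief_factor)
  qed
qed

theorem supersolvable_iff_ideal_index_one:
  "supersolvable scale br \<longleftrightarrow> (\<forall>M. max_subalg M \<longrightarrow> ideal_index scale br M = 1)"
proof
  assume ss: "supersolvable scale br"
  show "\<forall>M. max_subalg M \<longrightarrow> ideal_index scale br M = 1"
  proof (intro allI impI)
    fix M assume M: "max_subalg M"
    then have "\<not> UNIV \<subseteq> M" using max_subalg_neq_UNIV by blast
    then obtain C where C: "ideal_compl M C" using ideal_compl_exists_below[OF ideal_UNIV] by blast
    show "ideal_index scale br M = 1"
      using ideal_index_eq[OF M C] supersolvable_imp_ideal_compl_index_one[OF ss M C] by simp
  qed
next
  assume "\<forall>M. max_subalg M \<longrightarrow> ideal_index scale br M = 1"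
  then have "dim C - dim (core C) = 1" if "max_subalg M" "ideal_compl M C" for M C
    using ideal_index_eq[OF that] that(1) by simp
  then have "unit_ideal_chain {0}"
    by (intro unit_ideal_chainI[OF ideal_zero] dim_chief_factor_if_ideal_index_one)
  then show "supersolvable scale br" by (simp add: supersolvable_iff_unit_ideal_chain)
qed

end

theorem corollary2p8:
  fixes scale :: "'a::field \<Rightarrow> 'b::ab_group_add \<Rightarrow> 'b"
    and br :: "'b \<Rightarrow> 'b \<Rightarrow> 'b"
  assumes "lie_algebra scale br" and "fin_dim scale"
  shows "supersolvable scale br \<longleftrightarrow>
           (\<forall>M. maximal_subalgebra scale br M \<longrightarrow> ideal_index scale br M = 1)"
proof -
  interpret fin_dim_lie_algebra scale br using assms by unfold_locales
  show ?thesis by (rule supersolvable_iff_ideal_index_one)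
qed

end
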